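(* Let $\mu>0$ and let $\omega^2$ denote the Fourier multiplier operator on $2\pi$-periodic functions with symbol either (i) $\omega^2(k)=\dfrac{1+\mu^2k^2/6}{1+\mu^2k^2/2}\,k^2$, or (ii) $\omega^2(k)=k\,\dfrac{\tanh(\mu k)}{\mu}$. For any positive number $d$, there exist real numbers $\lambda$ and $\nu$ such that the solution $(\eta^e,q^e)$ of \[ \eta^e_t=-\lambda\,\eta^e+\omega^2 q^e,\qquad q^e_t=-(1+\nu)\,\eta^e, \] for $x\in[0,2\pi]$, $t\ge 0$, with periodic boundary conditions in $x$, satisfies \[ \|\eta^e(\cdot,t)\|_2\le C e^{-dt},\qquad \|q^e_x(\cdot,t)\|_2\le Ce^{-dt}\quad\text{for all }t\ge0, \] where $C$ is a constant depending on the initial condition.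
   Context: All functions are real-valued and $2\pi$-periodic in $x$; $\|\cdot\|_2$ is the $L^2([0,2\pi])$ norm. A Fourier multiplier with symbol $m(k)$ acts on Fourier coefficients by $\hat f_k\mapsto m(k)\hat f_k$. Choice (i) corresponds to the "regularised Boussinesq" model and choice (ii) to the "regularised Boussinesq-Whitham" model. *)

theory Defs
  imports "HOL-Analysis.Analysis"
begin

definition fourier_coeff :: "(real \<Rightarrow> real) \<Rightarrow> int \<Rightarrow> complex" where
  "fourier_coeff f k =
     integral {0..2*pi} (\<lambda>x. complex_of_real (f x) * exp (- (\<i> * of_int k * complex_of_real x)))
       / complex_of_real (2*pi)"

definition l2norm :: "(real \<Rightarrow> real) \<Rightarrow> real" where
  "l2norm f = sqrt (integral {0..2*pi} (\<lambda>x. (f x)\<^sup>2))"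

definition omega2_i :: "real \<Rightarrow> int \<Rightarrow> real" where
  "omega2_i \<mu> k = (1 + \<mu>\<^sup>2 * (real_of_int k)\<^sup>2 / 6) / (1 + \<mu>\<^sup>2 * (real_of_int k)\<^sup>2 / 2)
                    * (real_of_int k)\<^sup>2"

definition omega2_ii :: "real \<Rightarrow> int \<Rightarrow> real" where
  "omega2_ii \<mu> k = real_of_int k * tanh (\<mu> * real_of_int k) / \<mu>"

text \<open>(eta, q), indexed as eta t x, is a (classical) solution for t >= 0 of
  eta_t = -lambda eta + omega^2 q,  q_t = -(1+nu) eta, 2pi-periodic in x,
  where omega^2 is the Fourier multiplier with symbol m (W t = omega^2 (q t)).\<close>
definition is_solution ::
  "(int \<Rightarrow> real) \<Rightarrow> real \<Rightarrow> real \<Rightarrow> (real \<Rightarrow> real \<Rightarrow> real) \<Rightarrow> (real \<Rightarrow> real \<Rightarrow> real) \<Rightarrow> bool" where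
  "is_solution m lam nu eta q \<longleftrightarrow>
     (\<exists>eta_t q_t q_x W.
        (\<forall>t x. eta t (x + 2*pi) = eta t x \<and> q t (x + 2*pi) = q t x) \<and>
        continuous_on ({0..} \<times> UNIV) (\<lambda>(t,x). eta t x) \<and>
        continuous_on ({0..} \<times> UNIV) (\<lambda>(t,x). q t x) \<and>
        continuous_on ({0..} \<times> UNIV) (\<lambda>(t,x). eta_t t x) \<and>
        continuous_on ({0..} \<times> UNIV) (\<lambda>(t,x). q_t t x) \<and>
        continuous_on ({0..} \<times> UNIV) (\<lambda>(t,x). q_x t x) \<and>
        continuous_on ({0..} \<times> UNIV) (\<lambda>(t,x). W t x) \<and>
        (\<forall>t\<ge>0. \<forall>x. ((\<lambda>s. eta s x) has_real_derivative eta_t t x) (at t within {0..})) \<and>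
        (\<forall>t\<ge>0. \<forall>x. ((\<lambda>s. q s x) has_real_derivative q_t t x) (at t within {0..})) \<and>
        (\<forall>t\<ge>0. \<forall>x. ((\<lambda>y. q t y) has_real_derivative q_x t x) (at x)) \<and>
        (\<forall>t\<ge>0. \<forall>k. fourier_coeff (W t) k = complex_of_real (m k) * fourier_coeff (q t) k) \<and>
        (\<forall>t\<ge>0. \<forall>x. eta_t t x = - lam * eta t x + W t x) \<and>
        (\<forall>t\<ge>0. \<forall>x. q_t t x = - (1 + nu) * eta t x))"

end

theory Submission
  imports Defs
begin

text \<open>Each Fourier mode \<open>(u, v)\<close> of \<open>(eta, q)\<close> solves the damped oscillator
  \<open>u' = - lam u + m v\<close>, \<open>v' = - a u\<close> with \<open>a = 1 + nu\<close> and \<open>m = \<omega>\<^sup>2(k)\<close>.  Its energy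
  \<open>a u\<^sup>2 + m v\<^sup>2\<close> is dissipated only through \<open>u\<close>, but the Lyapunov function
  \<open>energy - lam u v\<close> shows that it decays like \<open>exp (- lam t / 3)\<close> once the frequency
  \<open>sqrt (a m)\<close> exceeds \<open>lam\<close>.  As symbol (ii) grows only linearly in \<open>k\<close>, the energy does not
  control \<open>u\<^sup>2 + k\<^sup>2 v\<^sup>2\<close> uniformly in \<open>k\<close>; instead, a sufficiently stiff oscillator
  equipartitions its energy over the time interval \<open>[0, 1]\<close>, so that \<open>u(t)\<^sup>2\<close> and \<open>v(t)\<^sup>2\<close> are
  bounded by \<open>exp (- lam t / 3)\<close> times their own means over \<open>[0, 1]\<close>, with a constant independent
  of \<open>k\<close>.  Taking \<open>lam = 6 d\<close> and \<open>a\<close> large enough for all \<open>k \<noteq> 0\<close> (the symbols are bounded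
  below there), summing over the modes with Bessel's inequality on \<open>[0, 1]\<close> and Parseval's
  identity at time \<open>t\<close> gives the decay of \<open>\<parallel>eta\<parallel>\<close> and \<open>\<parallel>q\<^sub>x\<parallel>\<close> at rate \<open>lam / 6 = d\<close>.\<close>

section \<open>Damped oscillators\<close>

lemma has_real_derivative_nonpos_imp_antimono:
  fixes g g' :: "real \<Rightarrow> real"
  assumes deriv: "\<And>t. t \<ge> 0 \<Longrightarrow> (g has_real_derivative g' t) (at t within {0..})"
    and nonpos: "\<And>t. t \<ge> 0 \<Longrightarrow> g' t \<le> 0"
    and "0 \<le> s" "s \<le> t"
  shows "g t \<le> g s"
proof -
  have "(g' has_integral (g t - g s)) {s..t}"
  proof (rule fundamental_theorem_of_calculus)
    fix x assume "x \<in> {s..t}"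
    with \<open>0 \<le> s\<close> have "(g has_real_derivative g' x) (at x within {s..t})"
      by (intro DERIV_subset[OF deriv]) auto
    then show "(g has_vector_derivative g' x) (at x within {s..t})"
      by (simp add: has_real_derivative_iff_has_vector_derivative)
  qed (use \<open>s \<le> t\<close> in simp)
  moreover have "g' x \<le> 0" if "x \<in> {s..t}" for x
    using nonpos that \<open>0 \<le> s\<close> by simp
  ultimately have "g t - g s \<le> 0"
    by (rule has_integral_le[OF _ has_integral_0])
  then show ?thesis by simp
qed

lemma gronwall_exp_decay:
  fixes g g' :: "real \<Rightarrow> real"
  assumes deriv: "\<And>t. t \<ge> 0 \<Longrightarrow> (g has_real_derivative g' t) (at t within {0..})"
    and decay: "\<And>t. t \<ge> 0 \<Longrightarrow> g' t \<le> - c * g t"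
    and "t \<ge> 0"
  shows "g t \<le> exp (- c * t) * g 0"
proof -
  define h where "h t = exp (c * t) * g t" for t
  have "(h has_real_derivative exp (c * t) * (c * g t + g' t)) (at t within {0..})" if "t \<ge> 0" for t
    unfolding h_def
    by (rule derivative_eq_intros refl deriv[OF that] | simp add: algebra_simps)+
  moreover have "exp (c * t) * (c * g t + g' t) \<le> 0" if "t \<ge> 0" for t
    using decay[OF that] by (simp add: mult_nonneg_nonpos)
  ultimately have "h t \<le> h 0"
    using \<open>t \<ge> 0\<close> by (intro has_real_derivative_nonpos_imp_antimono[of h]) auto
  then have "exp (- c * t) * h t \<le> exp (- c * t) * g 0"
    by (simp add: h_def)
  then show ?thesis
    by (simp add: h_def mult.assoc[symmetric] exp_add[symmetric])
qed

lemma gronwall_exp_growth_lower: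
  fixes g g' :: "real \<Rightarrow> real"
  assumes deriv: "\<And>t. t \<ge> 0 \<Longrightarrow> (g has_real_derivative g' t) (at t within {0..})"
    and growth: "\<And>t. t \<ge> 0 \<Longrightarrow> g' t \<ge> - c * g t"
    and "t \<ge> 0"
  shows "exp (- c * t) * g 0 \<le> g t"
proof -
  have "- g t \<le> exp (- c * t) * - g 0"
  proof (rule gronwall_exp_decay[of "\<lambda>t. - g t" "\<lambda>t. - g' t" c t])
    show "((\<lambda>t. - g t) has_real_derivative - g' t) (at t within {0..})" if "t \<ge> 0" for t
      using deriv[OF that] by (rule DERIV_minus)
    show "- g' s \<le> - c * - g s" if "s \<ge> 0" for s
      using growth[OF that] by simp
  qed (use \<open>t \<ge> 0\<close> in simp)
  then show ?thesis by simp
qed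

lemma has_real_derivative_imp_continuous_on_nonneg:
  fixes g :: "real \<Rightarrow> real"
  assumes "\<And>t. t \<ge> 0 \<Longrightarrow> (g has_real_derivative g' t) (at t within {0..})"
  shows "continuous_on {0..} g"
  using assms unfolding continuous_on_eq_continuous_within
  by (meson DERIV_continuous atLeast_iff)

lemma const_le_integral_unit_interval:
  fixes f :: "real \<Rightarrow> real"
  assumes "f integrable_on {0..1}" and "\<And>s. s \<in> {0..1} \<Longrightarrow> c \<le> f s"
  shows "c \<le> integral {0..1} f"
proof -
  have "((\<lambda>s::real. c) has_integral c) {0..1}"
    using has_integral_const_real[of c 0 1] by simp
  then show ?thesis
    using assms by (intro has_integral_le[OF _ integrable_integral]) auto
qed

locale damped_oscillator =
  fixes u v :: "real \<Rightarrow> real" and lam a m :: real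
  assumes lam_pos: "lam > 0" and a_pos: "a > 0" and m_pos: "m > 0"
    and u_deriv: "\<And>t. t \<ge> 0 \<Longrightarrow> (u has_real_derivative - lam * u t + m * v t) (at t within {0..})"
    and v_deriv: "\<And>t. t \<ge> 0 \<Longrightarrow> (v has_real_derivative - a * u t) (at t within {0..})"
begin

definition energy :: "real \<Rightarrow> real" where
  "energy t = a * (u t)\<^sup>2 + m * (v t)\<^sup>2"

lemma energy_nonneg: "energy t \<ge> 0"
  using a_pos m_pos by (simp add: energy_def)

lemma energy_deriv:
  "t \<ge> 0 \<Longrightarrow> (energy has_real_derivative - 2 * lam * a * (u t)\<^sup>2) (at t within {0..})"
  unfolding energy_def
  by (rule derivative_eq_intros refl u_deriv v_deriv | assumption | simp add: algebra_simps power2_eq_square)+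

lemma energy_antimono: "0 \<le> s \<Longrightarrow> s \<le> t \<Longrightarrow> energy t \<le> energy s"
  using lam_pos a_pos
  by (intro has_real_derivative_nonpos_imp_antimono[OF energy_deriv]) auto

lemma energy_lower:
  assumes "t \<ge> 0" shows "exp (- 2 * lam * t) * energy 0 \<le> energy t"
proof -
  have "- (2 * lam) * energy s \<le> - 2 * lam * a * (u s)\<^sup>2" for s
    using lam_pos m_pos by (simp add: energy_def)
  then show ?thesis
    using gronwall_exp_growth_lower[OF energy_deriv _ assms] by simp
qed

lemma cross_term_bound: "\<bar>u t * v t\<bar> \<le> energy t / (2 * sqrt (a * m))"
proof -
  have "0 \<le> (sqrt a * \<bar>u t\<bar> - sqrt m * \<bar>v t\<bar>)\<^sup>2" by simp
  also have "\<dots> = energy t - 2 * sqrt (a * m) * \<bar>u t * v t\<bar>"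
    using a_pos m_pos
    by (simp add: energy_def power2_diff real_sqrt_mult abs_mult algebra_simps)
  finally show ?thesis
    using a_pos m_pos by (simp add: field_simps)
qed

text \<open>The energy alone decays only through the damping of \<open>u\<close>; the cross term \<open>u v\<close>
  transfers this damping to \<open>v\<close>.  It is dominated by the energy as soon as the frequency
  \<open>sqrt (a * m)\<close> exceeds the damping rate.\<close>
lemma energy_decay:
  assumes slow: "lam \<le> sqrt (a * m)" and "t \<ge> 0"
  shows "energy t \<le> 3 * exp (- (lam / 3) * t) * energy 0"
proof -
  define L where "L s = energy s - lam * (u s * v s)" for s
  have small: "lam * \<bar>u s * v s\<bar> \<le> energy s / 2" for s
  proof -
    have "lam * \<bar>u s * v s\<bar> \<le> sqrt (a * m) * (energy s / (2 * sqrt (a * m)))"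
      using cross_term_bound[of s] slow lam_pos energy_nonneg[of s] a_pos m_pos
      by (intro mult_mono) auto
    also have "\<dots> = energy s / 2"
      using a_pos m_pos by simp
    finally show ?thesis .
  qed
  then have cross: "\<bar>lam * (u s * v s)\<bar> \<le> energy s / 2" for s
    using lam_pos by (simp add: abs_mult)
  have L_upper: "L s \<le> 3 / 2 * energy s" and L_lower: "energy s / 2 \<le> L s" for s
    using cross[of s] unfolding L_def abs_le_iff by linarith+
  have L_deriv: "(L has_real_derivative - lam * energy s + lam\<^sup>2 * (u s * v s)) (at s within {0..})"
    if "s \<ge> 0" for s
    unfolding L_def
    by (rule derivative_eq_intros refl energy_deriv u_deriv v_deriv that
        | simp add: energy_def algebra_simps power2_eq_square)+
  have "- lam * energy s + lam\<^sup>2 * (u s * v s) \<le> - (lam / 3) * L s" for s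
  proof -
    have "lam\<^sup>2 * (u s * v s) \<le> lam * (energy s / 2)"
      using cross[of s] lam_pos unfolding abs_le_iff power2_eq_square mult.assoc
      by (intro mult_left_mono) auto
    moreover have "lam / 3 * L s \<le> lam / 3 * (3 / 2 * energy s)"
      using L_upper[of s] lam_pos by (intro mult_left_mono) auto
    ultimately show ?thesis by linarith
  qed
  then have "L t \<le> exp (- (lam / 3) * t) * L 0"
    by (intro gronwall_exp_decay[OF L_deriv] \<open>t \<ge> 0\<close>)
  also have "\<dots> \<le> exp (- (lam / 3) * t) * (3 / 2 * energy 0)"
    using L_upper by (intro mult_left_mono) auto
  finally show ?thesis
    using L_lower[of t] by simp
qed

lemma u_continuous: "continuous_on {0..} u"
  using u_deriv by (rule has_real_derivative_imp_continuous_on_nonneg)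

lemma v_continuous: "continuous_on {0..} v"
  using v_deriv by (rule has_real_derivative_imp_continuous_on_nonneg)

lemma cross_term_deriv:
  "s \<ge> 0 \<Longrightarrow> ((\<lambda>s. u s * v s) has_real_derivative
      - lam * (u s * v s) + m * (v s)\<^sup>2 - a * (u s)\<^sup>2) (at s within {0..})"
  by (rule derivative_eq_intros refl u_deriv v_deriv | assumption
      | simp add: algebra_simps power2_eq_square)+

lemma has_integral_unit_interval:
  "((\<lambda>s. (u s)\<^sup>2) has_integral integral {0..1} (\<lambda>s. (u s)\<^sup>2)) {0..1}"
  "((\<lambda>s. (v s)\<^sup>2) has_integral integral {0..1} (\<lambda>s. (v s)\<^sup>2)) {0..1}"
  "((\<lambda>s. u s * v s) has_integral integral {0..1} (\<lambda>s. u s * v s)) {0..1}"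
proof -
  have cont: "continuous_on {0..1} u" "continuous_on {0..1} v"
    by (auto intro: continuous_on_subset[OF u_continuous] continuous_on_subset[OF v_continuous])
  show "((\<lambda>s. (u s)\<^sup>2) has_integral integral {0..1} (\<lambda>s. (u s)\<^sup>2)) {0..1}"
    "((\<lambda>s. (v s)\<^sup>2) has_integral integral {0..1} (\<lambda>s. (v s)\<^sup>2)) {0..1}"
    "((\<lambda>s. u s * v s) has_integral integral {0..1} (\<lambda>s. u s * v s)) {0..1}"
    by (intro integrable_integral integrable_continuous_interval continuous_intros cont)+
qed

lemma virial_identity:
  "m * integral {0..1} (\<lambda>s. (v s)\<^sup>2) - a * integral {0..1} (\<lambda>s. (u s)\<^sup>2)
    = u 1 * v 1 - u 0 * v 0 + lam * integral {0..1} (\<lambda>s. u s * v s)"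
proof -
  have "((\<lambda>s. - lam * (u s * v s) + m * (v s)\<^sup>2 - a * (u s)\<^sup>2) has_integral
      (u 1 * v 1 - u 0 * v 0)) {0..1}"
  proof (rule fundamental_theorem_of_calculus)
    fix s :: real assume "s \<in> {0..1}"
    then show "((\<lambda>s. u s * v s) has_vector_derivative
        - lam * (u s * v s) + m * (v s)\<^sup>2 - a * (u s)\<^sup>2) (at s within {0..1})"
      unfolding has_real_derivative_iff_has_vector_derivative[symmetric]
      by (intro DERIV_subset[OF cross_term_deriv]) auto
  qed simp
  moreover have "((\<lambda>s. - lam * (u s * v s) + m * (v s)\<^sup>2 - a * (u s)\<^sup>2) has_integral
      - lam * integral {0..1} (\<lambda>s. u s * v s) + m * integral {0..1} (\<lambda>s. (v s)\<^sup>2)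
        - a * integral {0..1} (\<lambda>s. (u s)\<^sup>2)) {0..1}"
    by (intro has_integral_diff has_integral_add has_integral_mult_right has_integral_unit_interval)
  ultimately have "u 1 * v 1 - u 0 * v 0 = - lam * integral {0..1} (\<lambda>s. u s * v s)
      + m * integral {0..1} (\<lambda>s. (v s)\<^sup>2) - a * integral {0..1} (\<lambda>s. (u s)\<^sup>2)"
    by (rule has_integral_unique)
  then show ?thesis
    by linarith
qed

lemma virial_bound:
  "\<bar>m * integral {0..1} (\<lambda>s. (v s)\<^sup>2) - a * integral {0..1} (\<lambda>s. (u s)\<^sup>2)\<bar>
    \<le> (2 + lam) * (energy 0 / (2 * sqrt (a * m)))"
proof -
  define B where "B = energy 0 / (2 * sqrt (a * m))"
  have cross_bound: "\<bar>u s * v s\<bar> \<le> B" if "s \<ge> 0" for s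
  proof -
    have "energy s / (2 * sqrt (a * m)) \<le> B"
      unfolding B_def using energy_antimono[of 0 s] that a_pos m_pos
      by (intro divide_right_mono) auto
    then show ?thesis
      using cross_term_bound[of s] by linarith
  qed
  have "\<bar>integral {0..1} (\<lambda>s. u s * v s)\<bar> \<le> B"
    using has_integral_bound_real[OF _ finite.emptyI has_integral_unit_interval(3)] cross_bound
      energy_nonneg a_pos m_pos
    by (simp add: B_def)
  then have "\<bar>lam * integral {0..1} (\<lambda>s. u s * v s)\<bar> \<le> lam * B"
    using lam_pos by (simp add: abs_mult)
  then show ?thesis
    unfolding virial_identity B_def[symmetric] using cross_bound[of 0] cross_bound[of 1]
    by (simp add: algebra_simps)
qed

lemma integral_energy_lower:
  "exp (- 2 * lam) * energy 0 \<le> a * integral {0..1} (\<lambda>s. (u s)\<^sup>2) + m * integral {0..1} (\<lambda>s. (v s)\<^sup>2)"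
proof -
  have "((\<lambda>s. energy s) has_integral
      a * integral {0..1} (\<lambda>s. (u s)\<^sup>2) + m * integral {0..1} (\<lambda>s. (v s)\<^sup>2)) {0..1}"
    unfolding energy_def by (intro has_integral_add has_integral_mult_right has_integral_unit_interval)
  moreover have "exp (- 2 * lam) * energy 0 \<le> energy s" if "s \<in> {0..1}" for s
  proof -
    have "exp (- 2 * lam) * energy 0 \<le> exp (- 2 * lam * s) * energy 0"
      using that lam_pos energy_nonneg[of 0] by (intro mult_right_mono) auto
    also have "\<dots> \<le> energy s"
      using that by (intro energy_lower) auto
    finally show ?thesis .
  qed
  ultimately show ?thesis
    using const_le_integral_unit_interval[of energy] by (simp add: has_integral_iff)
qed

text \<open>Over one unit of time a stiff oscillator splits its energy evenly between \<open>u\<close> and \<open>v\<close>: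
  by the virial identity the imbalance is of order \<open>energy 0 / sqrt (a * m)\<close>, small against
  the total, which is at least \<open>exp (- 2 * lam) * energy 0\<close>.\<close>
lemma equipartition:
  assumes stiff: "(2 + lam) * exp (2 * lam) \<le> sqrt (a * m)"
  shows "exp (- 2 * lam) * energy 0 / 4 \<le> a * integral {0..1} (\<lambda>s. (u s)\<^sup>2)"
    and "exp (- 2 * lam) * energy 0 / 4 \<le> m * integral {0..1} (\<lambda>s. (v s)\<^sup>2)"
proof -
  have S_pos: "sqrt (a * m) > 0"
    using a_pos m_pos by simp
  have "2 + lam \<le> sqrt (a * m) * exp (- 2 * lam)"
  proof -
    have "(2 + lam) * exp (2 * lam) * exp (- 2 * lam) \<le> sqrt (a * m) * exp (- 2 * lam)"
      using stiff by simp
    then show ?thesis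
      by (simp add: mult.assoc flip: exp_add)
  qed
  then have "(2 + lam) * (energy 0 / (2 * sqrt (a * m)))
      \<le> sqrt (a * m) * exp (- 2 * lam) * (energy 0 / (2 * sqrt (a * m)))"
    using energy_nonneg S_pos by (intro mult_right_mono) auto
  also have "\<dots> = exp (- 2 * lam) * energy 0 / 2"
    using S_pos by (auto simp: field_simps simp del: real_sqrt_gt_0_iff real_sqrt_mult)
  finally show "exp (- 2 * lam) * energy 0 / 4 \<le> a * integral {0..1} (\<lambda>s. (u s)\<^sup>2)"
    "exp (- 2 * lam) * energy 0 / 4 \<le> m * integral {0..1} (\<lambda>s. (v s)\<^sup>2)"
    using virial_bound integral_energy_lower by linarith+
qed

lemma stiff_imp_slow:
  assumes "(2 + lam) * exp (2 * lam) \<le> sqrt (a * m)"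
  shows "lam \<le> sqrt (a * m)"
proof -
  have "lam \<le> (2 + lam) * 1" by simp
  also have "\<dots> \<le> (2 + lam) * exp (2 * lam)"
    using lam_pos by (intro mult_left_mono) auto
  finally show ?thesis using assms by linarith
qed

lemma decay_of_energy_share:
  assumes stiff: "(2 + lam) * exp (2 * lam) \<le> sqrt (a * m)"
    and "c > 0" and share: "\<And>s. c * (w s)\<^sup>2 \<le> energy s"
    and mean: "exp (- 2 * lam) * energy 0 / 4 \<le> c * integral {0..1} (\<lambda>s. (w s)\<^sup>2)"
    and "t \<ge> 0"
  shows "(w t)\<^sup>2 \<le> 12 * exp (2 * lam) * exp (- (lam / 3) * t) * integral {0..1} (\<lambda>s. (w s)\<^sup>2)"
proof -
  have "energy 0 = 4 * exp (2 * lam) * (exp (- 2 * lam) * energy 0 / 4)"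
    by (simp flip: exp_add)
  also have "\<dots> \<le> 4 * exp (2 * lam) * (c * integral {0..1} (\<lambda>s. (w s)\<^sup>2))"
    using mean by (intro mult_left_mono) auto
  finally have energy_0: "energy 0 \<le> 4 * exp (2 * lam) * (c * integral {0..1} (\<lambda>s. (w s)\<^sup>2))" .
  have "c * (w t)\<^sup>2 \<le> energy t"
    by (rule share)
  also have "\<dots> \<le> 3 * exp (- (lam / 3) * t) * energy 0"
    using stiff_imp_slow[OF stiff] \<open>t \<ge> 0\<close> by (rule energy_decay)
  also have "\<dots> \<le> 3 * exp (- (lam / 3) * t) * (4 * exp (2 * lam) * (c * integral {0..1} (\<lambda>s. (w s)\<^sup>2)))"
    using energy_0 by (intro mult_left_mono) auto
  finally have "c * (w t)\<^sup>2 \<le> c * (12 * exp (2 * lam) * exp (- (lam / 3) * t) * integral {0..1} (\<lambda>s. (w s)\<^sup>2))"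
    by (simp add: algebra_simps)
  then show ?thesis
    using \<open>c > 0\<close> by simp
qed

lemma u_decay:
  assumes "(2 + lam) * exp (2 * lam) \<le> sqrt (a * m)" and "t \<ge> 0"
  shows "(u t)\<^sup>2 \<le> 12 * exp (2 * lam) * exp (- (lam / 3) * t) * integral {0..1} (\<lambda>s. (u s)\<^sup>2)"
  using assms m_pos by (intro decay_of_energy_share[OF _ a_pos _ equipartition(1)])
    (auto simp: energy_def)

lemma v_decay:
  assumes "(2 + lam) * exp (2 * lam) \<le> sqrt (a * m)" and "t \<ge> 0"
  shows "(v t)\<^sup>2 \<le> 12 * exp (2 * lam) * exp (- (lam / 3) * t) * integral {0..1} (\<lambda>s. (v s)\<^sup>2)"
  using assms a_pos by (intro decay_of_energy_share[OF _ m_pos _ equipartition(2)])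
    (auto simp: energy_def)

end

lemma pure_damping_decay:
  fixes u :: "real \<Rightarrow> real"
  assumes "lam > 0"
    and u_deriv: "\<And>t. t \<ge> 0 \<Longrightarrow> (u has_real_derivative - lam * u t) (at t within {0..})"
    and "t \<ge> 0"
  shows "(u t)\<^sup>2 \<le> 12 * exp (2 * lam) * exp (- (lam / 3) * t) * integral {0..1} (\<lambda>s. (u s)\<^sup>2)"
proof -
  have sq_deriv: "((\<lambda>s. (u s)\<^sup>2) has_real_derivative - (2 * lam) * (u s)\<^sup>2) (at s within {0..})"
    if "s \<ge> 0" for s
    by (rule derivative_eq_intros refl u_deriv that | simp add: power2_eq_square)+
  have "exp (- 2 * lam) * (u 0)\<^sup>2 \<le> (u s)\<^sup>2" if "s \<in> {0..1}" for s
  proof -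
    have "exp (- 2 * lam) * (u 0)\<^sup>2 \<le> exp (- (2 * lam) * s) * (u 0)\<^sup>2"
      using that \<open>lam > 0\<close> by (intro mult_right_mono) auto
    also have "\<dots> \<le> (u s)\<^sup>2"
      using that by (intro gronwall_exp_growth_lower[OF sq_deriv]) auto
    finally show ?thesis .
  qed
  moreover have "continuous_on {0..1} u"
    using has_real_derivative_imp_continuous_on_nonneg[OF u_deriv] by (rule continuous_on_subset) auto
  ultimately have mean: "exp (- 2 * lam) * (u 0)\<^sup>2 \<le> integral {0..1} (\<lambda>s. (u s)\<^sup>2)"
    by (intro const_le_integral_unit_interval integrable_continuous_interval continuous_intros)
  have "(u t)\<^sup>2 \<le> exp (- (2 * lam) * t) * (u 0)\<^sup>2"
    using \<open>t \<ge> 0\<close> by (intro gronwall_exp_decay[OF sq_deriv]) auto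
  also have "\<dots> \<le> exp (- (lam / 3) * t) * (u 0)\<^sup>2"
    using \<open>t \<ge> 0\<close> \<open>lam > 0\<close> by (intro mult_right_mono) auto
  also have "\<dots> \<le> 12 * exp (- (lam / 3) * t) * (u 0)\<^sup>2"
    by simp
  also have "(u 0)\<^sup>2 = exp (2 * lam) * (exp (- 2 * lam) * (u 0)\<^sup>2)"
    by (simp flip: exp_add)
  also have "12 * exp (- (lam / 3) * t) * \<dots>
      \<le> 12 * exp (- (lam / 3) * t) * (exp (2 * lam) * integral {0..1} (\<lambda>s. (u s)\<^sup>2))"
    using mean by (intro mult_left_mono) auto
  finally show ?thesis by (simp add: algebra_simps)
qed

section \<open>Trigonometric polynomials and Parseval's identity\<close>

definition trig_poly :: "nat \<Rightarrow> (nat \<Rightarrow> real) \<Rightarrow> (nat \<Rightarrow> real) \<Rightarrow> real \<Rightarrow> real" where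
  "trig_poly N c d x = (\<Sum>k<N. c k * cos (real k * x) + d k * sin (real k * x))"

definition trig_polys :: "(real \<Rightarrow> real) set" where
  "trig_polys = {trig_poly N c d | N c d. True}"

lemma trig_poly_in_trig_polys [simp]: "trig_poly N c d \<in> trig_polys"
  unfolding trig_polys_def by blast

lemma trig_polysE:
  assumes "g \<in> trig_polys"
  obtains N c d where "g = trig_poly N c d"
  using assms unfolding trig_polys_def by blast

lemma sum_lessThan_pad:
  fixes f :: "nat \<Rightarrow> 'a::comm_monoid_add"
  assumes "N \<le> M"
  shows "(\<Sum>k<N. f k) = (\<Sum>k<M. if k < N then f k else 0)"
  by (rule sum.mono_neutral_cong_left) (use assms in auto)

lemma trig_polys_add: "g \<in> trig_polys \<Longrightarrow> h \<in> trig_polys \<Longrightarrow> (\<lambda>x. g x + h x) \<in> trig_polys"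
proof (elim trig_polysE)
  fix N c d N' c' d'
  assume g: "g = trig_poly N c d" and h: "h = trig_poly N' c' d'"
  define M where "M = N + N'"
  define pad where "pad n e k = (if k < n then e k else 0)" for n and e :: "nat \<Rightarrow> real" and k
  have "g x + h x = trig_poly M (\<lambda>k. pad N c k + pad N' c' k) (\<lambda>k. pad N d k + pad N' d' k) x" for x
  proof -
    have "g x + h x = (\<Sum>k<M. if k < N then c k * cos (real k * x) + d k * sin (real k * x) else 0)
        + (\<Sum>k<M. if k < N' then c' k * cos (real k * x) + d' k * sin (real k * x) else 0)"
      unfolding g h trig_poly_def M_def
      by (intro arg_cong2[where f = "(+)"] sum_lessThan_pad) auto
    also have "\<dots> = trig_poly M (\<lambda>k. pad N c k + pad N' c' k) (\<lambda>k. pad N d k + pad N' d' k) x"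
      unfolding trig_poly_def pad_def sum.distrib[symmetric] by (intro sum.cong) (auto simp: algebra_simps)
    finally show ?thesis .
  qed
  then have "(\<lambda>x. g x + h x) = trig_poly M (\<lambda>k. pad N c k + pad N' c' k) (\<lambda>k. pad N d k + pad N' d' k)"
    by blast
  then show ?thesis by simp
qed

lemma trig_polys_cmult: "g \<in> trig_polys \<Longrightarrow> (\<lambda>x. r * g x) \<in> trig_polys"
proof (elim trig_polysE)
  fix N c d assume "g = trig_poly N c d"
  then have "(\<lambda>x. r * g x) = trig_poly N (\<lambda>k. r * c k) (\<lambda>k. r * d k)"
    by (simp add: trig_poly_def fun_eq_iff sum_distrib_left algebra_simps)
  then show ?thesis by simp
qed

lemma trig_polys_const: "(\<lambda>x. r) \<in> trig_polys"
proof -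
  have "(\<lambda>x. r) = trig_poly 1 (\<lambda>k. r) (\<lambda>k. 0)"
    by (simp add: trig_poly_def fun_eq_iff)
  then show ?thesis by simp
qed

lemma trig_polys_sum:
  "finite A \<Longrightarrow> (\<And>i. i \<in> A \<Longrightarrow> f i \<in> trig_polys) \<Longrightarrow> (\<lambda>x. \<Sum>i\<in>A. f i x) \<in> trig_polys"
proof (induction A rule: finite_induct)
  case empty
  then show ?case using trig_polys_const[of 0] by simp
next
  case (insert i A)
  then show ?case by (simp add: trig_polys_add)
qed

lemma trig_polys_cos_nat: "(\<lambda>x. cos (real n * x)) \<in> trig_polys"
proof -
  have "(\<lambda>x. cos (real n * x)) = trig_poly (Suc n) (\<lambda>k. if k = n then 1 else 0) (\<lambda>k. 0)"
    by (simp add: trig_poly_def fun_eq_iff if_distrib[of "\<lambda>c. c * _"] cong: if_cong)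
  then show ?thesis by simp
qed

lemma trig_polys_sin_nat: "(\<lambda>x. sin (real n * x)) \<in> trig_polys"
proof -
  have "(\<lambda>x. sin (real n * x)) = trig_poly (Suc n) (\<lambda>k. 0) (\<lambda>k. if k = n then 1 else 0)"
    by (simp add: trig_poly_def fun_eq_iff if_distrib[of "\<lambda>c. c * _"] cong: if_cong)
  then show ?thesis by simp
qed

lemma trig_polys_cos: "(\<lambda>x. cos (of_int n * x)) \<in> trig_polys"
proof (cases "n \<ge> 0")
  case True
  then show ?thesis using trig_polys_cos_nat[of "nat n"] by simp
next
  case False
  then have "of_int n * x = - (real (nat (- n)) * x)" for x :: real
    by simp
  then have "(\<lambda>x. cos (of_int n * x)) = (\<lambda>x. cos (real (nat (- n)) * x))"
    by simp
  then show ?thesis using trig_polys_cos_nat by simp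
qed

lemma trig_polys_sin: "(\<lambda>x. sin (of_int n * x)) \<in> trig_polys"
proof (cases "n \<ge> 0")
  case True
  then show ?thesis using trig_polys_sin_nat[of "nat n"] by simp
next
  case False
  then have "of_int n * x = - (real (nat (- n)) * x)" for x :: real
    by simp
  then have "(\<lambda>x. sin (of_int n * x)) = (\<lambda>x. - 1 * sin (real (nat (- n)) * x))"
    by simp
  then show ?thesis using trig_polys_cmult[OF trig_polys_sin_nat[of "nat (- n)"], of "- 1"] by simp
qed

lemma trig_polys_basis_mult:
  fixes j k :: nat
  shows "(\<lambda>x. cos (real j * x) * cos (real k * x)) \<in> trig_polys"
    and "(\<lambda>x. sin (real j * x) * sin (real k * x)) \<in> trig_polys"
    and "(\<lambda>x. sin (real j * x) * cos (real k * x)) \<in> trig_polys"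
    and "(\<lambda>x. cos (real j * x) * sin (real k * x)) \<in> trig_polys"
proof -
  let ?diff = "of_int (int j - int k) :: real" and ?sum = "of_int (int j + int k) :: real"
  have cc: "(\<lambda>x. cos (real j * x) * cos (real k * x)) = (\<lambda>x. 1/2 * cos (?diff * x) + 1/2 * cos (?sum * x))"
    by (simp add: fun_eq_iff cos_times_cos algebra_simps)
  show "(\<lambda>x. cos (real j * x) * cos (real k * x)) \<in> trig_polys"
    unfolding cc by (intro trig_polys_add trig_polys_cmult trig_polys_cos)
  have ss: "(\<lambda>x. sin (real j * x) * sin (real k * x)) = (\<lambda>x. 1/2 * cos (?diff * x) + - 1/2 * cos (?sum * x))"
    by (simp add: fun_eq_iff sin_times_sin field_simps)
  show "(\<lambda>x. sin (real j * x) * sin (real k * x)) \<in> trig_polys"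
    unfolding ss by (intro trig_polys_add trig_polys_cmult trig_polys_cos)
  have sc: "(\<lambda>x. sin (real j * x) * cos (real k * x)) = (\<lambda>x. 1/2 * sin (?sum * x) + 1/2 * sin (?diff * x))"
    by (simp add: fun_eq_iff sin_times_cos distrib_right left_diff_distrib)
  show "(\<lambda>x. sin (real j * x) * cos (real k * x)) \<in> trig_polys"
    unfolding sc by (intro trig_polys_add trig_polys_cmult trig_polys_sin)
  have cs: "(\<lambda>x. cos (real j * x) * sin (real k * x)) = (\<lambda>x. 1/2 * sin (?sum * x) + - 1/2 * sin (?diff * x))"
    by (simp add: fun_eq_iff cos_times_sin field_simps)
  show "(\<lambda>x. cos (real j * x) * sin (real k * x)) \<in> trig_polys"
    unfolding cs by (intro trig_polys_add trig_polys_cmult trig_polys_sin)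
qed

lemma trig_polys_mult:
  assumes "g \<in> trig_polys" "h \<in> trig_polys"
  shows "(\<lambda>x. g x * h x) \<in> trig_polys"
proof -
  obtain N c d where g: "g = trig_poly N c d" using assms(1) by (rule trig_polysE)
  obtain N' c' d' where h: "h = trig_poly N' c' d'" using assms(2) by (rule trig_polysE)
  have basis_product: "(\<lambda>x. (c j * cos (real j * x) + d j * sin (real j * x))
      * (c' k * cos (real k * x) + d' k * sin (real k * x))) \<in> trig_polys" for j k
  proof -
    have "(\<lambda>x. (c j * cos (real j * x) + d j * sin (real j * x))
        * (c' k * cos (real k * x) + d' k * sin (real k * x)))
      = (\<lambda>x. (c j * c' k) * (cos (real j * x) * cos (real k * x))
        + ((c j * d' k) * (cos (real j * x) * sin (real k * x))
        + ((d j * c' k) * (sin (real j * x) * cos (real k * x))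
        + (d j * d' k) * (sin (real j * x) * sin (real k * x)))))"
      by (simp add: fun_eq_iff algebra_simps)
    then show ?thesis
      by (simp only:) (intro trig_polys_add trig_polys_cmult trig_polys_basis_mult)
  qed
  have "(\<lambda>x. g x * h x) = (\<lambda>x. \<Sum>j<N. \<Sum>k<N'. (c j * cos (real j * x) + d j * sin (real j * x))
      * (c' k * cos (real k * x) + d' k * sin (real k * x)))"
    unfolding g h trig_poly_def by (simp only: sum_product)
  then show ?thesis
    by (simp only:) (intro trig_polys_sum basis_product finite_lessThan)
qed

definition cos_coeff :: "(real \<Rightarrow> real) \<Rightarrow> nat \<Rightarrow> real" where
  "cos_coeff f k = integral {0..2*pi} (\<lambda>x. f x * cos (real k * x))"

definition sin_coeff :: "(real \<Rightarrow> real) \<Rightarrow> nat \<Rightarrow> real" where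
  "sin_coeff f k = integral {0..2*pi} (\<lambda>x. f x * sin (real k * x))"

definition cos_sq_integral :: "nat \<Rightarrow> real" where
  "cos_sq_integral k = (if k = 0 then 2*pi else pi)"

definition bessel_sum :: "(real \<Rightarrow> real) \<Rightarrow> nat \<Rightarrow> real" where
  "bessel_sum f N = (\<Sum>k<N. ((cos_coeff f k)\<^sup>2 + (sin_coeff f k)\<^sup>2) / cos_sq_integral k)"

lemma cos_sq_integral_pos: "cos_sq_integral k > 0"
  by (simp add: cos_sq_integral_def)

lemma sin_coeff_0 [simp]: "sin_coeff f 0 = 0"
  by (simp add: sin_coeff_def)

lemma has_integral_cos_coeff:
  "continuous_on {0..2*pi} f \<Longrightarrow> ((\<lambda>x. f x * cos (real k * x)) has_integral cos_coeff f k) {0..2*pi}"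
  unfolding cos_coeff_def by (intro integrable_integral integrable_continuous_interval continuous_intros)

lemma has_integral_sin_coeff:
  "continuous_on {0..2*pi} f \<Longrightarrow> ((\<lambda>x. f x * sin (real k * x)) has_integral sin_coeff f k) {0..2*pi}"
  unfolding sin_coeff_def by (intro integrable_integral integrable_continuous_interval continuous_intros)

lemma has_integral_cos_int:
  "((\<lambda>x. cos (of_int n * x)) has_integral (if n = 0 then 2*pi else 0)) {0..2*pi}"
proof (cases "n = 0")
  case True
  then show ?thesis using has_integral_const_real[of "1::real" 0 "2*pi"] by simp
next
  case False
  have "((\<lambda>x. cos (of_int n * x)) has_integral
      sin (of_int n * (2*pi)) / of_int n - sin (of_int n * 0) / of_int n) {0..2*pi}"
  proof (rule fundamental_theorem_of_calculus)
    fix x :: real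
    have "((\<lambda>x. sin (of_int n * x) / of_int n) has_real_derivative
        cos (of_int n * x) * (of_int n * 1) / of_int n) (at x within {0..2*pi})"
      by (auto intro!: derivative_eq_intros)
    then show "((\<lambda>x. sin (of_int n * x) / of_int n) has_vector_derivative cos (of_int n * x))
        (at x within {0..2*pi})"
      using False by (simp add: has_real_derivative_iff_has_vector_derivative)
  qed simp
  moreover have "sin (of_int n * (2*pi)) = 0"
    using sin_int_2pin[of n] by (simp add: mult.commute)
  ultimately show ?thesis using False by simp
qed

lemma has_integral_sin_int: "((\<lambda>x. sin (of_int n * x)) has_integral 0) {0..2*pi}"
proof (cases "n = 0")
  case False
  have "((\<lambda>x. sin (of_int n * x)) has_integral
      - cos (of_int n * (2*pi)) / of_int n - - cos (of_int n * 0) / of_int n) {0..2*pi}"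
  proof (rule fundamental_theorem_of_calculus)
    fix x :: real
    have "((\<lambda>x. - cos (of_int n * x) / of_int n) has_real_derivative
        - (- sin (of_int n * x) * (of_int n * 1)) / of_int n) (at x within {0..2*pi})"
      by (auto intro!: derivative_eq_intros)
    then show "((\<lambda>x. - cos (of_int n * x) / of_int n) has_vector_derivative sin (of_int n * x))
        (at x within {0..2*pi})"
      using False by (simp add: has_real_derivative_iff_has_vector_derivative)
  qed simp
  moreover have "cos (of_int n * (2*pi)) = 1"
    using cos_int_2pin[of n] by (simp add: mult.commute)
  ultimately show ?thesis using False by simp
qed simp

lemma has_integral_cos_cos:
  "((\<lambda>x. cos (real k * x) * cos (real j * x)) has_integral
    (if k = j then cos_sq_integral j else 0)) {0..2*pi}"
proof -
  have e: "cos (real k * x) * cos (real j * x)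
      = 1/2 * (cos (of_int (int k - int j) * x) + cos (of_int (int k + int j) * x))" for x
    using cos_times_cos[of "real k * x" "real j * x"] by (simp add: left_diff_distrib distrib_right)
  have "((\<lambda>x. 1/2 * (cos (of_int (int k - int j) * x) + cos (of_int (int k + int j) * x))) has_integral
      1/2 * ((if int k - int j = 0 then 2*pi else 0) + (if int k + int j = 0 then 2*pi else 0)))
    {0..2*pi}"
    by (intro has_integral_mult_right has_integral_add has_integral_cos_int)
  moreover have "1/2 * ((if int k - int j = 0 then 2*pi else 0) + (if int k + int j = 0 then 2*pi else 0))
      = (if k = j then cos_sq_integral j else 0)"
    by (auto simp: cos_sq_integral_def)
  ultimately show ?thesis by (simp add: e)
qed

lemma has_integral_sin_sin:
  "((\<lambda>x. sin (real k * x) * sin (real j * x)) has_integral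
    (if k = j \<and> j \<noteq> 0 then cos_sq_integral j else 0)) {0..2*pi}"
proof -
  have e: "sin (real k * x) * sin (real j * x)
      = 1/2 * (cos (of_int (int k - int j) * x) - cos (of_int (int k + int j) * x))" for x
    using sin_times_sin[of "real k * x" "real j * x"] by (simp add: left_diff_distrib distrib_right)
  have "((\<lambda>x. 1/2 * (cos (of_int (int k - int j) * x) - cos (of_int (int k + int j) * x))) has_integral
      1/2 * ((if int k - int j = 0 then 2*pi else 0) - (if int k + int j = 0 then 2*pi else 0)))
    {0..2*pi}"
    by (intro has_integral_mult_right has_integral_diff has_integral_cos_int)
  moreover have "1/2 * ((if int k - int j = 0 then 2*pi else 0) - (if int k + int j = 0 then 2*pi else 0))
      = (if k = j \<and> j \<noteq> 0 then cos_sq_integral j else 0)"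
    by (auto simp: cos_sq_integral_def)
  ultimately show ?thesis by (simp add: e)
qed

lemma has_integral_sin_cos: "((\<lambda>x. sin (real k * x) * cos (real j * x)) has_integral 0) {0..2*pi}"
proof -
  have e: "sin (real k * x) * cos (real j * x)
      = 1/2 * (sin (of_int (int k + int j) * x) + sin (of_int (int k - int j) * x))" for x
    using sin_times_cos[of "real k * x" "real j * x"] by (simp add: left_diff_distrib distrib_right)
  have "((\<lambda>x. 1/2 * (sin (of_int (int k + int j) * x) + sin (of_int (int k - int j) * x))) has_integral
      1/2 * (0 + 0)) {0..2*pi}"
    by (intro has_integral_mult_right has_integral_add has_integral_sin_int)
  then show ?thesis by (simp add: e)
qed

lemma has_integral_cos_sin: "((\<lambda>x. cos (real k * x) * sin (real j * x)) has_integral 0) {0..2*pi}"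
  using has_integral_sin_cos[of j k] by (simp add: mult.commute)

lemma has_integral_trig_poly_mult_cos:
  "((\<lambda>x. trig_poly N c d x * cos (real j * x)) has_integral
    (if j < N then c j * cos_sq_integral j else 0)) {0..2*pi}"
proof -
  have "((\<lambda>x. \<Sum>k<N. c k * (cos (real k * x) * cos (real j * x))
        + d k * (sin (real k * x) * cos (real j * x)))
      has_integral (\<Sum>k<N. c k * (if k = j then cos_sq_integral j else 0) + d k * 0)) {0..2*pi}"
    by (intro has_integral_sum has_integral_add has_integral_mult_right
        has_integral_cos_cos has_integral_sin_cos) auto
  moreover have "(\<Sum>k<N. c k * (if k = j then cos_sq_integral j else 0) + d k * 0)
      = (if j < N then c j * cos_sq_integral j else 0)"
    by (simp add: if_distrib[of "\<lambda>y. c _ * y"] sum.delta cong: if_cong)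
  moreover have "trig_poly N c d x * cos (real j * x) = (\<Sum>k<N. c k * (cos (real k * x) * cos (real j * x))
      + d k * (sin (real k * x) * cos (real j * x)))" for x
    unfolding trig_poly_def sum_distrib_right by (rule sum.cong) (simp_all add: algebra_simps)
  ultimately show ?thesis by simp
qed

lemma has_integral_trig_poly_mult_sin:
  "((\<lambda>x. trig_poly N c d x * sin (real j * x)) has_integral
    (if j < N \<and> j \<noteq> 0 then d j * cos_sq_integral j else 0)) {0..2*pi}"
proof -
  have "((\<lambda>x. \<Sum>k<N. c k * (cos (real k * x) * sin (real j * x))
        + d k * (sin (real k * x) * sin (real j * x)))
      has_integral (\<Sum>k<N. c k * 0 + d k * (if k = j \<and> j \<noteq> 0 then cos_sq_integral j else 0)))
    {0..2*pi}"
    by (intro has_integral_sum has_integral_add has_integral_mult_right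
        has_integral_sin_sin has_integral_cos_sin) auto
  moreover have "(\<Sum>k<N. c k * 0 + d k * (if k = j \<and> j \<noteq> 0 then cos_sq_integral j else 0))
      = (if j < N \<and> j \<noteq> 0 then d j * cos_sq_integral j else 0)"
    by (cases "j = 0") (simp_all add: if_distrib[of "\<lambda>y. d _ * y"] sum.delta cong: if_cong)
  moreover have "trig_poly N c d x * sin (real j * x) = (\<Sum>k<N. c k * (cos (real k * x) * sin (real j * x))
      + d k * (sin (real k * x) * sin (real j * x)))" for x
    unfolding trig_poly_def sum_distrib_right by (rule sum.cong) (simp_all add: algebra_simps)
  ultimately show ?thesis by simp
qed

lemma has_integral_trig_poly_square:
  "((\<lambda>x. (trig_poly N c d x)\<^sup>2) has_integral
    (\<Sum>j<N. (c j)\<^sup>2 * cos_sq_integral j + (if j \<noteq> 0 then (d j)\<^sup>2 * cos_sq_integral j else 0)))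
   {0..2*pi}"
proof -
  let ?T = "trig_poly N c d"
  have "((\<lambda>x. \<Sum>j<N. c j * (?T x * cos (real j * x)) + d j * (?T x * sin (real j * x)))
      has_integral (\<Sum>j<N. c j * (if j < N then c j * cos_sq_integral j else 0)
        + d j * (if j < N \<and> j \<noteq> 0 then d j * cos_sq_integral j else 0))) {0..2*pi}"
    by (intro has_integral_sum has_integral_add has_integral_mult_right
        has_integral_trig_poly_mult_cos has_integral_trig_poly_mult_sin) auto
  moreover have "(\<Sum>j<N. c j * (if j < N then c j * cos_sq_integral j else 0)
        + d j * (if j < N \<and> j \<noteq> 0 then d j * cos_sq_integral j else 0))
      = (\<Sum>j<N. (c j)\<^sup>2 * cos_sq_integral j + (if j \<noteq> 0 then (d j)\<^sup>2 * cos_sq_integral j else 0))"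
    by (rule sum.cong) (auto simp: power2_eq_square)
  moreover have "(?T x)\<^sup>2 = (\<Sum>j<N. c j * (?T x * cos (real j * x)) + d j * (?T x * sin (real j * x)))"
    for x
  proof -
    have "(?T x)\<^sup>2 = ?T x * ?T x"
      by (simp add: power2_eq_square)
    also have "\<dots> = (\<Sum>j<N. ?T x * (c j * cos (real j * x) + d j * sin (real j * x)))"
      by (subst (2) trig_poly_def) (simp add: sum_distrib_left)
    also have "\<dots> = (\<Sum>j<N. c j * (?T x * cos (real j * x)) + d j * (?T x * sin (real j * x)))"
      by (rule sum.cong) (simp_all add: algebra_simps)
    finally show ?thesis .
  qed
  ultimately show ?thesis by simp
qed

lemma has_integral_mult_trig_poly:
  assumes "continuous_on {0..2*pi} f"
  shows "((\<lambda>x. f x * trig_poly N c d x) has_integral (\<Sum>j<N. c j * cos_coeff f j + d j * sin_coeff f j)) {0..2*pi}"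
proof -
  have "((\<lambda>x. \<Sum>j<N. c j * (f x * cos (real j * x)) + d j * (f x * sin (real j * x))) has_integral
      (\<Sum>j<N. c j * cos_coeff f j + d j * sin_coeff f j)) {0..2*pi}"
    by (intro has_integral_sum has_integral_add has_integral_mult_right
        has_integral_cos_coeff has_integral_sin_coeff assms) auto
  then show ?thesis
    by (simp add: trig_poly_def sum_distrib_left algebra_simps)
qed

lemma has_integral_square_diff_trig_poly:
  assumes "continuous_on {0..2*pi} f"
  shows "((\<lambda>x. (f x - trig_poly N c d x)\<^sup>2) has_integral
      integral {0..2*pi} (\<lambda>x. (f x)\<^sup>2)
      - 2 * (\<Sum>j<N. c j * cos_coeff f j + d j * sin_coeff f j)
      + (\<Sum>j<N. (c j)\<^sup>2 * cos_sq_integral j + (if j \<noteq> 0 then (d j)\<^sup>2 * cos_sq_integral j else 0)))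
    {0..2*pi}"
proof -
  have "((\<lambda>x. (f x)\<^sup>2 - 2 * (f x * trig_poly N c d x) + (trig_poly N c d x)\<^sup>2) has_integral
      integral {0..2*pi} (\<lambda>x. (f x)\<^sup>2)
      - 2 * (\<Sum>j<N. c j * cos_coeff f j + d j * sin_coeff f j)
      + (\<Sum>j<N. (c j)\<^sup>2 * cos_sq_integral j + (if j \<noteq> 0 then (d j)\<^sup>2 * cos_sq_integral j else 0)))
    {0..2*pi}"
    by (intro has_integral_add has_integral_diff has_integral_mult_right
        has_integral_mult_trig_poly has_integral_trig_poly_square assms
        integrable_integral integrable_continuous_interval continuous_intros)
  then show ?thesis
    by (simp add: power2_diff algebra_simps)
qed

lemma bessel_inequality:
  assumes "continuous_on {0..2*pi} f"
  shows "bessel_sum f N \<le> integral {0..2*pi} (\<lambda>x. (f x)\<^sup>2)"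
proof -
  define c where "c k = cos_coeff f k / cos_sq_integral k" for k
  define d where "d k = sin_coeff f k / cos_sq_integral k" for k
  have "(\<Sum>j<N. c j * cos_coeff f j + d j * sin_coeff f j) = bessel_sum f N"
    unfolding bessel_sum_def c_def d_def
    by (rule sum.cong) (auto simp: power2_eq_square add_divide_distrib)
  moreover have "(\<Sum>j<N. (c j)\<^sup>2 * cos_sq_integral j + (if j \<noteq> 0 then (d j)\<^sup>2 * cos_sq_integral j else 0))
      = bessel_sum f N"
    unfolding bessel_sum_def c_def d_def
    using cos_sq_integral_pos by (intro sum.cong) (auto simp: power2_eq_square field_simps)
  ultimately have "((\<lambda>x. (f x - trig_poly N c d x)\<^sup>2) has_integral
      integral {0..2*pi} (\<lambda>x. (f x)\<^sup>2) - bessel_sum f N) {0..2*pi}"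
    using has_integral_square_diff_trig_poly[OF assms, of N c d] by simp
  then have "0 \<le> integral {0..2*pi} (\<lambda>x. (f x)\<^sup>2) - bessel_sum f N"
    by (rule has_integral_nonneg) simp
  then show ?thesis by simp
qed

lemma two_mult_le_weighted_squares:
  fixes a b w :: real
  assumes "w > 0"
  shows "2 * (a * b) \<le> a\<^sup>2 * w + b\<^sup>2 / w"
proof -
  have "0 \<le> (a * w - b)\<^sup>2 / w"
    using assms by simp
  also have "\<dots> = a\<^sup>2 * w + b\<^sup>2 / w - 2 * (a * b)"
    using assms by (simp add: power2_diff power_mult_distrib field_simps power2_eq_square)
  finally show ?thesis by simp
qed

text \<open>Expand the square and bound the cross terms by \<open>2 a b \<le> a\<^sup>2 w + b\<^sup>2 / w\<close>: no
  trigonometric polynomial of degree \<open>< N\<close> approximates \<open>f\<close> better than its partial Fourier sum.\<close>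
lemma integral_square_le_bessel_sum_plus_dist:
  assumes "continuous_on {0..2*pi} f"
  shows "integral {0..2*pi} (\<lambda>x. (f x)\<^sup>2)
    \<le> bessel_sum f N + integral {0..2*pi} (\<lambda>x. (f x - trig_poly N c d x)\<^sup>2)"
proof -
  have "2 * (c j * cos_coeff f j + d j * sin_coeff f j)
      \<le> (c j)\<^sup>2 * cos_sq_integral j + (if j \<noteq> 0 then (d j)\<^sup>2 * cos_sq_integral j else 0)
        + ((cos_coeff f j)\<^sup>2 + (sin_coeff f j)\<^sup>2) / cos_sq_integral j" for j
    using two_mult_le_weighted_squares[OF cos_sq_integral_pos, of "c j" "cos_coeff f j" j]
      two_mult_le_weighted_squares[OF cos_sq_integral_pos, of "d j" "sin_coeff f j" j]
    by (cases "j = 0") (simp_all add: add_divide_distrib)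
  then have "2 * (\<Sum>j<N. c j * cos_coeff f j + d j * sin_coeff f j)
      \<le> (\<Sum>j<N. (c j)\<^sup>2 * cos_sq_integral j + (if j \<noteq> 0 then (d j)\<^sup>2 * cos_sq_integral j else 0))
        + bessel_sum f N"
    unfolding bessel_sum_def sum_distrib_left sum.distrib[symmetric] by (intro sum_mono)
  then show ?thesis
    using integral_unique[OF has_integral_square_diff_trig_poly[OF assms, of N c d]] by linarith
qed

lemma exp_imaginary_image_Icc: "(\<lambda>x. exp (\<i> * complex_of_real x)) ` {0..2*pi} = sphere 0 1"
proof
  show "(\<lambda>x. exp (\<i> * complex_of_real x)) ` {0..2*pi} \<subseteq> sphere 0 1"
    by auto
  show "sphere 0 1 \<subseteq> (\<lambda>x. exp (\<i> * complex_of_real x)) ` {0..2*pi}"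
  proof
    fix z :: complex assume "z \<in> sphere 0 1"
    then have "z = exp (\<i> * complex_of_real (Arg2pi z))"
      using Arg2pi[of z] by (simp add: is_Arg_def)
    moreover have "Arg2pi z \<in> {0..2*pi}"
      using Arg2pi[of z] by auto
    ultimately show "z \<in> (\<lambda>x. exp (\<i> * complex_of_real x)) ` {0..2*pi}"
      by blast
  qed
qed

lemma periodic_function_on_circle:
  fixes f :: "real \<Rightarrow> real"
  assumes cont: "continuous_on UNIV f" and per: "\<And>x. f (x + 2*pi) = f x"
  shows "\<And>x. x \<in> {0..2*pi} \<Longrightarrow> f (Arg2pi (exp (\<i> * complex_of_real x))) = f x"
    and "continuous_on (sphere 0 1) (\<lambda>z. f (Arg2pi z))"
proof -
  define p where "p x = exp (\<i> * complex_of_real x)" for x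
  show F_p: "f (Arg2pi (p x)) = f x" if x: "x \<in> {0..2*pi}" for x
  proof (cases "x < 2*pi")
    case True
    then show ?thesis
      unfolding p_def using x by (subst Arg2pi_exp) auto
  next
    case False
    then have "x = 2*pi" and "p x = 1"
      using x by (auto simp: p_def mult.commute)
    then show ?thesis
      using per[of 0] by (simp add: Arg2pi_of_real[of 1, simplified])
  qed
  have p_cont: "continuous_on {0..2*pi} p"
    unfolding p_def by (intro continuous_intros)
  have p_image: "p ` {0..2*pi} = sphere 0 1"
    unfolding p_def by (rule exp_imaginary_image_Icc)
  show "continuous_on (sphere 0 1) (\<lambda>z. f (Arg2pi z))"
  proof (unfold continuous_openin_preimage_eq, intro allI impI)
    fix U :: "real set" assume "open U"
    define V where "V = sphere 0 1 \<inter> (\<lambda>z. f (Arg2pi z)) -` U"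
    have "p x \<in> sphere 0 1" if "x \<in> {0..2*pi}" for x
      using p_image that by blast
    then have "{0..2*pi} \<inter> p -` V = {0..2*pi} \<inter> f -` U"
      unfolding V_def using F_p by auto
    moreover have "openin (top_of_set {0..2*pi}) ({0..2*pi} \<inter> f -` U)"
      using continuous_on_subset[OF cont, of "{0..2*pi}"] \<open>open U\<close>
      unfolding continuous_openin_preimage_eq by auto
    moreover have "V \<subseteq> sphere 0 1"
      unfolding V_def by blast
    ultimately show "openin (top_of_set (sphere 0 1)) (sphere 0 1 \<inter> (\<lambda>z. f (Arg2pi z)) -` U)"
      unfolding V_def[symmetric]
      using Abstract_Topology_2.continuous_imp_quotient_map[OF p_cont p_image compact_Icc] by metis
  qed
qed

text \<open>Stone-Weierstrass on the unit circle, transported to \<open>[0, 2 pi]\<close> by \<open>x \<mapsto> exp (i x)\<close>.\<close>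
lemma trig_polys_uniformly_dense:
  fixes f :: "real \<Rightarrow> real"
  assumes cont: "continuous_on UNIV f" and per: "\<And>x. f (x + 2*pi) = f x" and "e > 0"
  obtains T where "T \<in> trig_polys" "\<And>x. x \<in> {0..2*pi} \<Longrightarrow> \<bar>f x - T x\<bar> < e"
proof -
  define p where "p x = exp (\<i> * complex_of_real x)" for x
  define P where "P g \<longleftrightarrow> continuous_on (sphere 0 1) g \<and> (\<lambda>x. g (p x)) \<in> trig_polys"
    for g :: "complex \<Rightarrow> real"
  have "\<exists>g. P g \<and> (\<forall>z\<in>sphere 0 1. \<bar>f (Arg2pi z) - g z\<bar> < e)"
  proof (rule Stone_Weierstrass_HOL[of "sphere 0 1" P])
    show "P (\<lambda>x. g x + h x)" if "P g \<and> P h" for g h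
      using that unfolding P_def by (auto intro: continuous_on_add trig_polys_add)
    show "P (\<lambda>x. g x * h x)" if "P g \<and> P h" for g h
      using that unfolding P_def by (auto intro: continuous_on_mult trig_polys_mult)
    show "\<exists>g. P g \<and> g z \<noteq> g w" if "z \<in> sphere 0 1 \<and> w \<in> sphere 0 1 \<and> z \<noteq> w" for z w
    proof -
      have "P Re" "P Im"
        using trig_polys_cos_nat[of 1] trig_polys_sin_nat[of 1]
        unfolding P_def by (auto intro!: continuous_intros simp: p_def Re_exp Im_exp)
      moreover have "Re z \<noteq> Re w \<or> Im z \<noteq> Im w"
        using that complex_eqI by blast
      ultimately show ?thesis by blast
    qed
  qed (use periodic_function_on_circle(2)[OF cont per] \<open>e > 0\<close> trig_polys_const in \<open>auto simp: P_def\<close>)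
  then obtain g where "P g" and g: "\<And>z. z \<in> sphere 0 1 \<Longrightarrow> \<bar>f (Arg2pi z) - g z\<bar> < e"
    by blast
  show ?thesis
  proof
    show "(\<lambda>x. g (p x)) \<in> trig_polys"
      using \<open>P g\<close> by (simp add: P_def)
    show "\<bar>f x - g (p x)\<bar> < e" if "x \<in> {0..2*pi}" for x
      using g[of "p x"] periodic_function_on_circle(1)[OF cont per that] exp_imaginary_image_Icc that
      unfolding p_def by auto
  qed
qed

lemma integral_square_le_of_bessel_sum_bound:
  fixes f :: "real \<Rightarrow> real"
  assumes cont: "continuous_on UNIV f" and per: "\<And>x. f (x + 2*pi) = f x"
    and bound: "\<And>N. bessel_sum f N \<le> B"
  shows "integral {0..2*pi} (\<lambda>x. (f x)\<^sup>2) \<le> B"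
proof (rule field_le_epsilon)
  fix e :: real assume "e > 0"
  define \<epsilon> where "\<epsilon> = sqrt (e / (2*pi))"
  have "\<epsilon> > 0" using \<open>e > 0\<close> by (simp add: \<epsilon>_def)
  then obtain T where "T \<in> trig_polys" and T: "\<And>x. x \<in> {0..2*pi} \<Longrightarrow> \<bar>f x - T x\<bar> < \<epsilon>"
    using trig_polys_uniformly_dense[OF cont per] by blast
  obtain N c d where T_def: "T = trig_poly N c d"
    using \<open>T \<in> trig_polys\<close> by (rule trig_polysE)
  have cont': "continuous_on {0..2*pi} f"
    using cont by (rule continuous_on_subset) simp
  have "((\<lambda>x. (f x - T x)\<^sup>2) has_integral integral {0..2*pi} (\<lambda>x. (f x - T x)\<^sup>2)) {0..2*pi}"
    unfolding T_def trig_poly_def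
    by (intro integrable_integral integrable_continuous_interval continuous_intros cont')
  moreover have "((\<lambda>x::real. \<epsilon>\<^sup>2) has_integral e) {0..2*pi}"
    using has_integral_const_real[of "\<epsilon>\<^sup>2" 0 "2*pi"] \<open>e > 0\<close> by (simp add: \<epsilon>_def)
  moreover have "(f x - T x)\<^sup>2 \<le> \<epsilon>\<^sup>2" if "x \<in> {0..2*pi}" for x
    using T[OF that] \<open>\<epsilon> > 0\<close> by (simp add: abs_le_square_iff[symmetric])
  ultimately have "integral {0..2*pi} (\<lambda>x. (f x - T x)\<^sup>2) \<le> e"
    by (rule has_integral_le)
  then show "integral {0..2*pi} (\<lambda>x. (f x)\<^sup>2) \<le> B + e"
    using integral_square_le_bessel_sum_plus_dist[OF cont', of N c d] bound[of N]
    unfolding T_def by linarith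
qed

section \<open>Fourier coefficients of time-dependent functions\<close>

lemma fourier_coeff_of_nat:
  assumes "continuous_on {0..2*pi} f"
  shows "fourier_coeff f (int k)
    = (complex_of_real (cos_coeff f k) - \<i> * complex_of_real (sin_coeff f k)) / complex_of_real (2*pi)"
proof -
  have "((\<lambda>x. complex_of_real (f x * cos (real k * x)) - \<i> * complex_of_real (f x * sin (real k * x)))
      has_integral (complex_of_real (cos_coeff f k) - \<i> * complex_of_real (sin_coeff f k))) {0..2*pi}"
    by (intro has_integral_diff has_integral_mult_right has_integral_of_real
        has_integral_cos_coeff has_integral_sin_coeff assms)
  moreover have "complex_of_real (f x) * exp (- (\<i> * of_int (int k) * complex_of_real x))
      = complex_of_real (f x * cos (real k * x)) - \<i> * complex_of_real (f x * sin (real k * x))" for x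
    by (simp add: complex_eq_iff Re_exp Im_exp)
  ultimately show ?thesis
    unfolding fourier_coeff_def by (simp add: integral_unique)
qed

lemma cos_sin_coeff_of_multiplier:
  assumes "continuous_on {0..2*pi} f" "continuous_on {0..2*pi} g"
    and "fourier_coeff g (int k) = complex_of_real r * fourier_coeff f (int k)"
  shows "cos_coeff g k = r * cos_coeff f k" "sin_coeff g k = r * sin_coeff f k"
proof -
  have "complex_of_real (cos_coeff g k) - \<i> * complex_of_real (sin_coeff g k)
      = complex_of_real r * (complex_of_real (cos_coeff f k) - \<i> * complex_of_real (sin_coeff f k))"
    using assms by (simp add: fourier_coeff_of_nat field_simps)
  then show "cos_coeff g k = r * cos_coeff f k" "sin_coeff g k = r * sin_coeff f k"
    by (simp_all add: complex_eq_iff)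
qed

lemma cos_sin_coeff_cmult:
  "cos_coeff (\<lambda>x. r * f x) k = r * cos_coeff f k" "sin_coeff (\<lambda>x. r * f x) k = r * sin_coeff f k"
  by (simp_all add: cos_coeff_def sin_coeff_def mult.assoc)

lemma cos_sin_coeff_add:
  assumes "continuous_on {0..2*pi} f" "continuous_on {0..2*pi} g"
  shows "cos_coeff (\<lambda>x. f x + g x) k = cos_coeff f k + cos_coeff g k"
    and "sin_coeff (\<lambda>x. f x + g x) k = sin_coeff f k + sin_coeff g k"
  using has_integral_add[OF has_integral_cos_coeff[OF assms(1)] has_integral_cos_coeff[OF assms(2)]]
    has_integral_add[OF has_integral_sin_coeff[OF assms(1)] has_integral_sin_coeff[OF assms(2)]]
  by (simp_all add: cos_coeff_def sin_coeff_def distrib_right integral_unique)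

lemma cos_sin_coeff_deriv:
  fixes h h' :: "real \<Rightarrow> real"
  assumes deriv: "\<And>x. (h has_real_derivative h' x) (at x)" and cont': "continuous_on UNIV h'"
    and per: "h (2*pi) = h 0"
  shows "cos_coeff h' k = real k * sin_coeff h k" "sin_coeff h' k = - real k * cos_coeff h k"
proof -
  have cont: "continuous_on {0..2*pi} h"
    using deriv by (meson DERIV_continuous continuous_at_imp_continuous_on)
  have h_deriv: "(h has_vector_derivative h' x) (at x)" for x
    using deriv by (simp add: has_real_derivative_iff_has_vector_derivative)
  have cos_deriv: "((\<lambda>x. cos (real k * x)) has_vector_derivative - real k * sin (real k * x)) (at x)"
    and sin_deriv: "((\<lambda>x. sin (real k * x)) has_vector_derivative real k * cos (real k * x)) (at x)" for x
    unfolding has_real_derivative_iff_has_vector_derivative[symmetric]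
    by (auto intro!: derivative_eq_intros)
  have cos_2pi: "cos (real k * (2*pi)) = 1" and sin_2pi: "sin (real k * (2*pi)) = 0"
    using cos_2npi[of k] sin_2npi[of k] by (simp_all add: mult.commute mult.left_commute)
  have "((\<lambda>x. h x * (- real k * sin (real k * x))) has_integral
      h (2*pi) * cos (real k * (2*pi)) - h 0 * cos (real k * 0) - real k * sin_coeff h k) {0..2*pi}"
    using has_integral_mult_right[OF has_integral_sin_coeff[OF cont], of "- real k" k] per cos_2pi
    by (simp add: algebra_simps)
  from integration_by_parts[OF bounded_bilinear_mult _ cont _ h_deriv cos_deriv this]
  show "cos_coeff h' k = real k * sin_coeff h k"
    by (simp add: cos_coeff_def integral_unique continuous_intros)
  have "((\<lambda>x. h x * (real k * cos (real k * x))) has_integral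
      h (2*pi) * sin (real k * (2*pi)) - h 0 * sin (real k * 0) - - real k * cos_coeff h k) {0..2*pi}"
    using has_integral_mult_right[OF has_integral_cos_coeff[OF cont], of "real k" k] sin_2pi
    by (simp add: algebra_simps)
  from integration_by_parts[OF bounded_bilinear_mult _ cont _ h_deriv sin_deriv this]
  show "sin_coeff h' k = - real k * cos_coeff h k"
    by (simp add: sin_coeff_def integral_unique continuous_intros)
qed

lemma continuous_on_slice:
  assumes "continuous_on (U \<times> UNIV) (\<lambda>(t, x). f t x)" and "t \<in> U"
  shows "continuous_on UNIV (f t)"
proof -
  have "continuous_on UNIV (\<lambda>x. (\<lambda>(t, x). f t x) (t, x))"
    by (rule continuous_on_compose2[OF assms(1)]) (use assms(2) in \<open>auto intro!: continuous_intros\<close>)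
  then show ?thesis by simp
qed

lemma continuous_on_integral_param_Icc:
  fixes g :: "real \<Rightarrow> real \<Rightarrow> real"
  assumes "continuous_on (U \<times> UNIV) (\<lambda>(t, x). g t x)"
  shows "continuous_on U (\<lambda>t. integral {a..b} (g t))"
proof -
  have "continuous_on (U \<times> cbox a b) (\<lambda>(t, x). g t x)"
    using assms by (rule continuous_on_subset) auto
  from integral_continuous_on_param[OF this] show ?thesis
    by simp
qed

lemma has_real_derivative_integral_mult:
  fixes f f' :: "real \<Rightarrow> real \<Rightarrow> real"
  assumes cont: "continuous_on ({0..} \<times> UNIV) (\<lambda>(t, x). f t x)"
    and cont': "continuous_on ({0..} \<times> UNIV) (\<lambda>(t, x). f' t x)"
    and deriv: "\<And>t x. t \<ge> 0 \<Longrightarrow> ((\<lambda>s. f s x) has_real_derivative f' t x) (at t within {0..})"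
    and cont_\<phi>: "continuous_on UNIV \<phi>"
    and "t \<ge> 0"
  shows "((\<lambda>s. integral {0..2*pi} (\<lambda>x. f s x * \<phi> x)) has_real_derivative
      integral {0..2*pi} (\<lambda>x. f' t x * \<phi> x)) (at t within {0..})"
proof -
  have "((\<lambda>s. integral (cbox 0 (2*pi)) (\<lambda>x. f s x * \<phi> x)) has_field_derivative
      integral (cbox 0 (2*pi)) (\<lambda>x. f' t x * \<phi> x)) (at t within {0..})"
  proof (rule leibniz_rule_field_derivative[where fx = "\<lambda>s x. f' s x * \<phi> x"])
    fix s x :: real assume "s \<in> {0..}"
    then show "((\<lambda>s. f s x * \<phi> x) has_field_derivative f' s x * \<phi> x) (at s within {0..})"
      using deriv by (auto intro!: derivative_eq_intros)
  next
    fix s :: real assume "s \<in> {0..}"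
    then have "continuous_on (cbox 0 (2*pi)) (\<lambda>x. f s x * \<phi> x)"
      using continuous_on_slice[OF cont] cont_\<phi> by (auto intro!: continuous_intros intro: continuous_on_subset)
    then show "(\<lambda>x. f s x * \<phi> x) integrable_on cbox 0 (2*pi)"
      by (rule integrable_continuous)
  next
    have "continuous_on ({0..} \<times> cbox 0 (2*pi)) (\<lambda>p. (\<lambda>(t, x). f' t x) p * \<phi> (snd p))"
      by (intro continuous_intros continuous_on_subset[OF cont'] continuous_on_compose2[OF cont_\<phi>]) auto
    then show "continuous_on ({0..} \<times> cbox 0 (2*pi)) (\<lambda>(s, x). f' s x * \<phi> x)"
      by (simp add: split_beta)
  qed (use \<open>t \<ge> 0\<close> in auto)
  then show ?thesis by simp
qed

lemma continuous_on_coeffs_param: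
  fixes f :: "real \<Rightarrow> real \<Rightarrow> real"
  assumes "continuous_on (U \<times> UNIV) (\<lambda>(t, x). f t x)"
  shows "continuous_on U (\<lambda>t. cos_coeff (f t) k)" "continuous_on U (\<lambda>t. sin_coeff (f t) k)"
    and "continuous_on U (\<lambda>t. integral {0..2*pi} (\<lambda>x. (f t x)\<^sup>2))"
proof -
  have "continuous_on (U \<times> UNIV) (\<lambda>p. (\<lambda>(t, x). f t x) p * cos (real k * snd p))"
    and "continuous_on (U \<times> UNIV) (\<lambda>p. (\<lambda>(t, x). f t x) p * sin (real k * snd p))"
    and "continuous_on (U \<times> UNIV) (\<lambda>p. ((\<lambda>(t, x). f t x) p)\<^sup>2)"
    by (intro continuous_intros assms)+
  then show "continuous_on U (\<lambda>t. cos_coeff (f t) k)" "continuous_on U (\<lambda>t. sin_coeff (f t) k)"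
    "continuous_on U (\<lambda>t. integral {0..2*pi} (\<lambda>x. (f t x)\<^sup>2))"
    unfolding cos_coeff_def sin_coeff_def
    by (auto intro!: continuous_on_integral_param_Icc simp: split_beta)
qed

lemma bessel_sum_decay_of_coeff_decay:
  fixes f :: "real \<Rightarrow> real \<Rightarrow> real"
  assumes cont: "continuous_on ({0..1} \<times> UNIV) (\<lambda>(t, x). f t x)"
    and bound: "\<And>s. s \<in> {0..1} \<Longrightarrow> integral {0..2*pi} (\<lambda>x. (f s x)\<^sup>2) \<le> B"
    and cos_decay: "\<And>k. (cos_coeff g k)\<^sup>2 \<le> K * integral {0..1} (\<lambda>s. (cos_coeff (f s) k)\<^sup>2)"
    and sin_decay: "\<And>k. (sin_coeff g k)\<^sup>2 \<le> K * integral {0..1} (\<lambda>s. (sin_coeff (f s) k)\<^sup>2)"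
    and "K \<ge> 0"
  shows "bessel_sum g N \<le> K * B"
proof -
  define I where "I k = integral {0..1} (\<lambda>s. (cos_coeff (f s) k)\<^sup>2)
    + integral {0..1} (\<lambda>s. (sin_coeff (f s) k)\<^sup>2)" for k
  have "((\<lambda>s. bessel_sum (f s) N) has_integral (\<Sum>k<N. I k / cos_sq_integral k)) {0..1}"
    unfolding bessel_sum_def I_def
    by (intro has_integral_sum has_integral_divide has_integral_add finite_lessThan
        integrable_integral integrable_continuous_interval continuous_intros
        continuous_on_coeffs_param[OF cont])
  moreover have "((\<lambda>s::real. B) has_integral B) {0..1}"
    using has_integral_const_real[of B 0 1] by simp
  moreover have "bessel_sum (f s) N \<le> B" if "s \<in> {0..1}" for s
  proof -
    have "continuous_on {0..2*pi} (f s)"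
      using continuous_on_slice[OF cont that] by (rule continuous_on_subset) simp
    then show ?thesis
      using bessel_inequality[of "f s" N] bound[OF that] by linarith
  qed
  ultimately have mean: "(\<Sum>k<N. I k / cos_sq_integral k) \<le> B"
    by (rule has_integral_le)
  have "bessel_sum g N \<le> (\<Sum>k<N. K * I k / cos_sq_integral k)"
    unfolding bessel_sum_def I_def
    using cos_decay sin_decay cos_sq_integral_pos
    by (intro sum_mono divide_right_mono) (auto simp: distrib_left add_mono less_imp_le)
  also have "\<dots> = K * (\<Sum>k<N. I k / cos_sq_integral k)"
    by (simp add: sum_distrib_left)
  also have "\<dots> \<le> K * B"
    using mean \<open>K \<ge> 0\<close> by (rule mult_left_mono)
  finally show ?thesis .
qed

lemma integral_square_decay_of_coeff_decay:
  fixes f :: "real \<Rightarrow> real \<Rightarrow> real" and K :: "real \<Rightarrow> real"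
  assumes cont: "continuous_on ({0..} \<times> UNIV) (\<lambda>(t, x). f t x)"
    and per: "\<And>t x. t \<ge> 0 \<Longrightarrow> f t (x + 2*pi) = f t x"
    and cos_decay: "\<And>t k. t \<ge> 0 \<Longrightarrow>
      (cos_coeff (f t) k)\<^sup>2 \<le> K t * integral {0..1} (\<lambda>s. (cos_coeff (f s) k)\<^sup>2)"
    and sin_decay: "\<And>t k. t \<ge> 0 \<Longrightarrow>
      (sin_coeff (f t) k)\<^sup>2 \<le> K t * integral {0..1} (\<lambda>s. (sin_coeff (f s) k)\<^sup>2)"
    and K_nonneg: "\<And>t. t \<ge> 0 \<Longrightarrow> K t \<ge> 0"
  obtains B where "\<And>t. t \<ge> 0 \<Longrightarrow> integral {0..2*pi} (\<lambda>x. (f t x)\<^sup>2) \<le> K t * B"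
proof -
  have cont_unit: "continuous_on ({0..1} \<times> UNIV) (\<lambda>(t, x). f t x)"
    using cont by (rule continuous_on_subset) auto
  obtain B where B: "\<And>s. s \<in> {0..1} \<Longrightarrow> integral {0..2*pi} (\<lambda>x. (f s x)\<^sup>2) \<le> B"
    using compact_imp_bounded[OF compact_continuous_image[OF continuous_on_coeffs_param(3)[OF cont_unit]]]
    unfolding bounded_iff by (metis abs_le_D1 compact_Icc image_eqI real_norm_def)
  show ?thesis
  proof
    fix t :: real assume "t \<ge> 0"
    have "continuous_on UNIV (f t)"
      using \<open>t \<ge> 0\<close> by (intro continuous_on_slice[OF cont]) simp
    then show "integral {0..2*pi} (\<lambda>x. (f t x)\<^sup>2) \<le> K t * B"
      using per[OF \<open>t \<ge> 0\<close>] cos_decay[OF \<open>t \<ge> 0\<close>] sin_decay[OF \<open>t \<ge> 0\<close>] K_nonneg[OF \<open>t \<ge> 0\<close>]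
      by (intro integral_square_le_of_bessel_sum_bound bessel_sum_decay_of_coeff_decay[OF cont_unit B])
  qed
qed

lemma has_real_derivative_cos_sin_coeff:
  fixes f f' :: "real \<Rightarrow> real \<Rightarrow> real"
  assumes cont: "continuous_on ({0..} \<times> UNIV) (\<lambda>(t, x). f t x)"
    and cont': "continuous_on ({0..} \<times> UNIV) (\<lambda>(t, x). f' t x)"
    and deriv: "\<And>t x. t \<ge> 0 \<Longrightarrow> ((\<lambda>s. f s x) has_real_derivative f' t x) (at t within {0..})"
    and "t \<ge> 0"
  shows "((\<lambda>s. cos_coeff (f s) k) has_real_derivative cos_coeff (f' t) k) (at t within {0..})"
    and "((\<lambda>s. sin_coeff (f s) k) has_real_derivative sin_coeff (f' t) k) (at t within {0..})"
proof -
  have "continuous_on UNIV (\<lambda>x. cos (real k * x))" "continuous_on UNIV (\<lambda>x. sin (real k * x))"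
    by (intro continuous_intros)+
  from this[THEN has_real_derivative_integral_mult[OF cont cont' deriv, rotated], OF \<open>t \<ge> 0\<close>]
  show "((\<lambda>s. cos_coeff (f s) k) has_real_derivative cos_coeff (f' t) k) (at t within {0..})"
    "((\<lambda>s. sin_coeff (f s) k) has_real_derivative sin_coeff (f' t) k) (at t within {0..})"
    unfolding cos_coeff_def sin_coeff_def by simp_all
qed

section \<open>The damped wave system\<close>

locale damped_wave_solution =
  fixes m :: "int \<Rightarrow> real" and lam nu :: real and eta q eta_t q_t q_x W :: "real \<Rightarrow> real \<Rightarrow> real"
  assumes periodic: "\<forall>t x. eta t (x + 2*pi) = eta t x \<and> q t (x + 2*pi) = q t x"
    and cont_eta: "continuous_on ({0..} \<times> UNIV) (\<lambda>(t, x). eta t x)"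
    and cont_q: "continuous_on ({0..} \<times> UNIV) (\<lambda>(t, x). q t x)"
    and cont_eta_t: "continuous_on ({0..} \<times> UNIV) (\<lambda>(t, x). eta_t t x)"
    and cont_q_t: "continuous_on ({0..} \<times> UNIV) (\<lambda>(t, x). q_t t x)"
    and cont_q_x: "continuous_on ({0..} \<times> UNIV) (\<lambda>(t, x). q_x t x)"
    and cont_W: "continuous_on ({0..} \<times> UNIV) (\<lambda>(t, x). W t x)"
    and eta_deriv: "\<forall>t\<ge>0. \<forall>x. ((\<lambda>s. eta s x) has_real_derivative eta_t t x) (at t within {0..})"
    and q_deriv: "\<forall>t\<ge>0. \<forall>x. ((\<lambda>s. q s x) has_real_derivative q_t t x) (at t within {0..})"
    and q_x_deriv: "\<forall>t\<ge>0. \<forall>x. ((\<lambda>y. q t y) has_real_derivative q_x t x) (at x)"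
    and multiplier: "\<forall>t\<ge>0. \<forall>k. fourier_coeff (W t) k = complex_of_real (m k) * fourier_coeff (q t) k"
    and eta_eq: "\<forall>t\<ge>0. \<forall>x. eta_t t x = - lam * eta t x + W t x"
    and q_eq: "\<forall>t\<ge>0. \<forall>x. q_t t x = - (1 + nu) * eta t x"

lemma is_solution_iff_damped_wave_solution:
  "is_solution m lam nu eta q \<longleftrightarrow> (\<exists>eta_t q_t q_x W. damped_wave_solution m lam nu eta q eta_t q_t q_x W)"
  unfolding is_solution_def damped_wave_solution_def by (simp only: conj_assoc)

context damped_wave_solution
begin

lemma continuous_on_slices:
  assumes "t \<ge> 0"
  shows "continuous_on {0..2*pi} (eta t)" "continuous_on {0..2*pi} (q t)" "continuous_on {0..2*pi} (W t)"
proof -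
  have "t \<in> {0..}" using assms by simp
  then show "continuous_on {0..2*pi} (eta t)" "continuous_on {0..2*pi} (q t)" "continuous_on {0..2*pi} (W t)"
    using continuous_on_slice[OF cont_eta] continuous_on_slice[OF cont_q] continuous_on_slice[OF cont_W]
    by (meson continuous_on_subset subset_UNIV)+
qed

lemma cos_sin_coeff_odes:
  assumes "t \<ge> 0"
  shows "((\<lambda>s. cos_coeff (eta s) k) has_real_derivative
      - lam * cos_coeff (eta t) k + m (int k) * cos_coeff (q t) k) (at t within {0..})"
    and "((\<lambda>s. sin_coeff (eta s) k) has_real_derivative
      - lam * sin_coeff (eta t) k + m (int k) * sin_coeff (q t) k) (at t within {0..})"
    and "((\<lambda>s. cos_coeff (q s) k) has_real_derivative - (1 + nu) * cos_coeff (eta t) k) (at t within {0..})"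
    and "((\<lambda>s. sin_coeff (q s) k) has_real_derivative - (1 + nu) * sin_coeff (eta t) k) (at t within {0..})"
proof -
  have eta_t: "eta_t t = (\<lambda>x. - lam * eta t x + W t x)" and q_t: "q_t t = (\<lambda>x. - (1 + nu) * eta t x)"
    using eta_eq q_eq assms by (simp_all add: fun_eq_iff)
  have d_eta: "\<And>t x. t \<ge> 0 \<Longrightarrow> ((\<lambda>s. eta s x) has_real_derivative eta_t t x) (at t within {0..})"
    and d_q: "\<And>t x. t \<ge> 0 \<Longrightarrow> ((\<lambda>s. q s x) has_real_derivative q_t t x) (at t within {0..})"
    using eta_deriv q_deriv by blast+
  have cont: "continuous_on {0..2*pi} (\<lambda>x. - lam * eta t x)"
    using continuous_on_slices(1)[OF assms] by (intro continuous_intros)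
  have W: "cos_coeff (W t) k = m (int k) * cos_coeff (q t) k" "sin_coeff (W t) k = m (int k) * sin_coeff (q t) k"
    using cos_sin_coeff_of_multiplier[OF continuous_on_slices(2,3)[OF assms]] multiplier assms by simp_all
  have "cos_coeff (eta_t t) k = - lam * cos_coeff (eta t) k + m (int k) * cos_coeff (q t) k"
    "sin_coeff (eta_t t) k = - lam * sin_coeff (eta t) k + m (int k) * sin_coeff (q t) k"
    unfolding eta_t cos_sin_coeff_add[OF cont continuous_on_slices(3)[OF assms]] cos_sin_coeff_cmult W
    by (rule refl)+
  with has_real_derivative_cos_sin_coeff[OF cont_eta cont_eta_t d_eta assms, of k]
  show "((\<lambda>s. cos_coeff (eta s) k) has_real_derivative
      - lam * cos_coeff (eta t) k + m (int k) * cos_coeff (q t) k) (at t within {0..})"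
    "((\<lambda>s. sin_coeff (eta s) k) has_real_derivative
      - lam * sin_coeff (eta t) k + m (int k) * sin_coeff (q t) k) (at t within {0..})"
    by simp_all
  have "cos_coeff (q_t t) k = - (1 + nu) * cos_coeff (eta t) k"
    "sin_coeff (q_t t) k = - (1 + nu) * sin_coeff (eta t) k"
    unfolding q_t cos_sin_coeff_cmult by (rule refl)+
  with has_real_derivative_cos_sin_coeff[OF cont_q cont_q_t d_q assms, of k]
  show "((\<lambda>s. cos_coeff (q s) k) has_real_derivative - (1 + nu) * cos_coeff (eta t) k) (at t within {0..})"
    "((\<lambda>s. sin_coeff (q s) k) has_real_derivative - (1 + nu) * sin_coeff (eta t) k) (at t within {0..})"
    by simp_all
qed

lemma q_x_periodic:
  assumes "t \<ge> 0"
  shows "q_x t (x + 2*pi) = q_x t x"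
proof (rule DERIV_unique)
  have "((\<lambda>y. q t (y + 2*pi)) has_real_derivative q_x t (x + 2*pi) * (1 + 0)) (at x)"
    using q_x_deriv assms by (intro DERIV_chain2[where f = "q t"] derivative_intros) auto
  moreover have "(\<lambda>y. q t (y + 2*pi)) = q t"
    using periodic by auto
  ultimately show "(q t has_real_derivative q_x t (x + 2*pi)) (at x)"
    by simp
  show "(q t has_real_derivative q_x t x) (at x)"
    using q_x_deriv assms by simp
qed

lemma cos_sin_coeff_q_x:
  assumes "t \<ge> 0"
  shows "cos_coeff (q_x t) k = real k * sin_coeff (q t) k"
    and "sin_coeff (q_x t) k = - real k * cos_coeff (q t) k"
proof -
  have "t \<in> {0..}" using assms by simp
  then have "continuous_on UNIV (q_x t)"
    by (rule continuous_on_slice[OF cont_q_x])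
  moreover have "q t (2*pi) = q t 0"
    using periodic by (metis add_0)
  ultimately show "cos_coeff (q_x t) k = real k * sin_coeff (q t) k"
    "sin_coeff (q_x t) k = - real k * cos_coeff (q t) k"
    using cos_sin_coeff_deriv[of "q t" "q_x t"] q_x_deriv assms by auto
qed

context
  assumes lam_pos: "lam > 0" and coupling_pos: "1 + nu > 0" and m_0: "m 0 = 0"
    and stiff: "\<And>k::nat. k \<ge> 1 \<Longrightarrow> (2 + lam) * exp (2 * lam) \<le> sqrt ((1 + nu) * m (int k))"
begin

lemma modes_are_damped_oscillators:
  assumes "k \<ge> 1"
  shows "damped_oscillator (\<lambda>s. cos_coeff (eta s) k) (\<lambda>s. cos_coeff (q s) k) lam (1 + nu) (m (int k))"
    and "damped_oscillator (\<lambda>s. sin_coeff (eta s) k) (\<lambda>s. sin_coeff (q s) k) lam (1 + nu) (m (int k))"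
proof -
  have "0 < (2 + lam) * exp (2 * lam)"
    using lam_pos by simp
  then have "0 < (1 + nu) * m (int k)"
    using stiff[OF assms] by (smt (verit) real_sqrt_le_0_iff)
  then have "m (int k) > 0"
    using coupling_pos by (simp add: zero_less_mult_iff)
  then show "damped_oscillator (\<lambda>s. cos_coeff (eta s) k) (\<lambda>s. cos_coeff (q s) k) lam (1 + nu) (m (int k))"
    "damped_oscillator (\<lambda>s. sin_coeff (eta s) k) (\<lambda>s. sin_coeff (q s) k) lam (1 + nu) (m (int k))"
    using lam_pos coupling_pos cos_sin_coeff_odes by (auto intro!: damped_oscillator.intro)
qed

lemma eta_coeff_decay:
  assumes "t \<ge> 0"
  shows "(cos_coeff (eta t) k)\<^sup>2
      \<le> 12 * exp (2 * lam) * exp (- (lam / 3) * t) * integral {0..1} (\<lambda>s. (cos_coeff (eta s) k)\<^sup>2)"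
    and "(sin_coeff (eta t) k)\<^sup>2
      \<le> 12 * exp (2 * lam) * exp (- (lam / 3) * t) * integral {0..1} (\<lambda>s. (sin_coeff (eta s) k)\<^sup>2)"
proof -
  have zero: "((\<lambda>s. cos_coeff (eta s) 0) has_real_derivative - lam * cos_coeff (eta t') 0) (at t' within {0..})"
    "((\<lambda>s. sin_coeff (eta s) 0) has_real_derivative - lam * sin_coeff (eta t') 0) (at t' within {0..})"
    if "t' \<ge> 0" for t'
    using cos_sin_coeff_odes(1,2)[OF that, of 0] m_0 by simp_all
  consider "k = 0" | "k \<ge> 1" by linarith
  then show "(cos_coeff (eta t) k)\<^sup>2
      \<le> 12 * exp (2 * lam) * exp (- (lam / 3) * t) * integral {0..1} (\<lambda>s. (cos_coeff (eta s) k)\<^sup>2)"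
    "(sin_coeff (eta t) k)\<^sup>2
      \<le> 12 * exp (2 * lam) * exp (- (lam / 3) * t) * integral {0..1} (\<lambda>s. (sin_coeff (eta s) k)\<^sup>2)"
    using zero[THEN pure_damping_decay[OF lam_pos _ assms]]
      damped_oscillator.u_decay[OF modes_are_damped_oscillators(1) stiff assms]
      damped_oscillator.u_decay[OF modes_are_damped_oscillators(2) stiff assms]
    by (cases; simp)+
qed

text \<open>The zero mode of \<open>q\<close> does not decay, but it is annihilated by the \<open>x\<close>-derivative.\<close>
lemma q_x_coeff_decay:
  assumes "t \<ge> 0"
  shows "(cos_coeff (q_x t) k)\<^sup>2
      \<le> 12 * exp (2 * lam) * exp (- (lam / 3) * t) * integral {0..1} (\<lambda>s. (cos_coeff (q_x s) k)\<^sup>2)"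
    and "(sin_coeff (q_x t) k)\<^sup>2
      \<le> 12 * exp (2 * lam) * exp (- (lam / 3) * t) * integral {0..1} (\<lambda>s. (sin_coeff (q_x s) k)\<^sup>2)"
proof -
  define K where "K = 12 * exp (2 * lam) * exp (- (lam / 3) * t)"
  have "integral {0..1} (\<lambda>s. (cos_coeff (q_x s) k)\<^sup>2) = (real k)\<^sup>2 * integral {0..1} (\<lambda>s. (sin_coeff (q s) k)\<^sup>2)"
    "integral {0..1} (\<lambda>s. (sin_coeff (q_x s) k)\<^sup>2) = (real k)\<^sup>2 * integral {0..1} (\<lambda>s. (cos_coeff (q s) k)\<^sup>2)"
    unfolding integral_mult_right[symmetric]
    by (intro integral_cong; simp add: cos_sin_coeff_q_x power_mult_distrib)+
  moreover have "(sin_coeff (q t) k)\<^sup>2 \<le> K * integral {0..1} (\<lambda>s. (sin_coeff (q s) k)\<^sup>2)"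
    and "(cos_coeff (q t) k)\<^sup>2 \<le> K * integral {0..1} (\<lambda>s. (cos_coeff (q s) k)\<^sup>2)"
    if "k \<ge> 1"
    unfolding K_def
    using damped_oscillator.v_decay[OF modes_are_damped_oscillators(2)[OF that] stiff[OF that] assms]
      damped_oscillator.v_decay[OF modes_are_damped_oscillators(1)[OF that] stiff[OF that] assms]
    by simp_all
  then have "(real k)\<^sup>2 * (sin_coeff (q t) k)\<^sup>2 \<le> (real k)\<^sup>2 * (K * integral {0..1} (\<lambda>s. (sin_coeff (q s) k)\<^sup>2))"
    and "(real k)\<^sup>2 * (cos_coeff (q t) k)\<^sup>2 \<le> (real k)\<^sup>2 * (K * integral {0..1} (\<lambda>s. (cos_coeff (q s) k)\<^sup>2))"
    by (cases "k = 0"; simp add: mult_left_mono)+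
  ultimately show "(cos_coeff (q_x t) k)\<^sup>2 \<le> K * integral {0..1} (\<lambda>s. (cos_coeff (q_x s) k)\<^sup>2)"
    "(sin_coeff (q_x t) k)\<^sup>2 \<le> K * integral {0..1} (\<lambda>s. (sin_coeff (q_x s) k)\<^sup>2)"
    using assms by (simp_all add: cos_sin_coeff_q_x power_mult_distrib mult.left_commute)
qed

lemma l2norm_decay:
  "\<exists>C. \<forall>t\<ge>0. l2norm (eta t) \<le> C * exp (- (lam / 6) * t)
      \<and> l2norm (\<lambda>x. deriv (q t) x) \<le> C * exp (- (lam / 6) * t)"
proof -
  define K where "K t = 12 * exp (2 * lam) * exp (- (lam / 3) * t)" for t
  have "\<exists>B. \<forall>t\<ge>0. integral {0..2*pi} (\<lambda>x. (eta t x)\<^sup>2) \<le> K t * B"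
    by (rule integral_square_decay_of_coeff_decay[where f = eta and K = K])
      (use cont_eta periodic eta_coeff_decay in \<open>auto simp: K_def\<close>)
  then obtain B1 where B1: "\<And>t. t \<ge> 0 \<Longrightarrow> integral {0..2*pi} (\<lambda>x. (eta t x)\<^sup>2) \<le> K t * B1"
    by blast
  have "\<exists>B. \<forall>t\<ge>0. integral {0..2*pi} (\<lambda>x. (q_x t x)\<^sup>2) \<le> K t * B"
    by (rule integral_square_decay_of_coeff_decay[where f = q_x and K = K])
      (use cont_q_x q_x_periodic q_x_coeff_decay in \<open>auto simp: K_def\<close>)
  then obtain B2 where B2: "\<And>t. t \<ge> 0 \<Longrightarrow> integral {0..2*pi} (\<lambda>x. (q_x t x)\<^sup>2) \<le> K t * B2"
    by blast
  define C where "C = sqrt (12 * exp (2 * lam) * max B1 B2)"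
  have sqrt_K: "sqrt (K t * max B1 B2) = C * exp (- (lam / 6) * t)" for t
  proof -
    have "exp (- (lam / 3) * t) = (exp (- (lam / 6) * t))\<^sup>2"
      by (simp add: power2_eq_square flip: exp_add)
    then show ?thesis
      by (simp add: K_def C_def real_sqrt_mult)
  qed
  have max_bound: "K t * B1 \<le> K t * max B1 B2" "K t * B2 \<le> K t * max B1 B2" for t
    by (simp_all add: K_def mult_left_mono)
  have deriv_q: "(\<lambda>x. deriv (q t) x) = q_x t" if "t \<ge> 0" for t
    using q_x_deriv that by (auto intro!: DERIV_imp_deriv)
  show ?thesis
  proof (intro exI allI impI conjI)
    fix t :: real assume "t \<ge> 0"
    have "integral {0..2*pi} (\<lambda>x. (eta t x)\<^sup>2) \<le> K t * max B1 B2"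
      using B1[OF \<open>t \<ge> 0\<close>] max_bound(1) by (rule order_trans)
    then show "l2norm (eta t) \<le> C * exp (- (lam / 6) * t)"
      unfolding l2norm_def sqrt_K[symmetric] by (rule real_sqrt_le_mono)
    have "integral {0..2*pi} (\<lambda>x. (q_x t x)\<^sup>2) \<le> K t * max B1 B2"
      using B2[OF \<open>t \<ge> 0\<close>] max_bound(2) by (rule order_trans)
    then show "l2norm (\<lambda>x. deriv (q t) x) \<le> C * exp (- (lam / 6) * t)"
      unfolding l2norm_def sqrt_K[symmetric] deriv_q[OF \<open>t \<ge> 0\<close>] by (rule real_sqrt_le_mono)
  qed
qed

end

end

lemma omega2_i_ge:
  assumes "k \<noteq> 0"
  shows "1 / 3 \<le> omega2_i \<mu> k"
proof -
  define y where "y = \<mu>\<^sup>2 * (real_of_int k)\<^sup>2"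
  have "y \<ge> 0" by (simp add: y_def)
  then have "1 / 3 \<le> (1 + y / 6) / (1 + y / 2)"
    by (simp add: field_simps)
  moreover have "1 \<le> \<bar>real_of_int k\<bar>"
    using assms by linarith
  then have "1 \<le> (real_of_int k)\<^sup>2"
    using one_le_power[of "\<bar>real_of_int k\<bar>" 2] by simp
  ultimately have "1 / 3 * 1 \<le> (1 + y / 6) / (1 + y / 2) * (real_of_int k)\<^sup>2"
    using \<open>y \<ge> 0\<close> by (intro mult_mono) auto
  then show ?thesis
    by (simp add: omega2_i_def y_def)
qed

lemma omega2_ii_ge:
  assumes "\<mu> > 0" and "k \<noteq> 0"
  shows "tanh \<mu> / \<mu> \<le> omega2_ii \<mu> k"
proof -
  have "real_of_int k * tanh (\<mu> * real_of_int k) = \<bar>real_of_int k\<bar> * tanh (\<mu> * \<bar>real_of_int k\<bar>)"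
    by (cases "k \<ge> 0") simp_all
  moreover have "1 \<le> \<bar>real_of_int k\<bar>"
    using assms(2) by linarith
  then have "1 * tanh \<mu> \<le> \<bar>real_of_int k\<bar> * tanh (\<mu> * \<bar>real_of_int k\<bar>)"
    using assms(1) by (intro mult_mono) auto
  ultimately show ?thesis
    using assms(1) by (simp add: omega2_ii_def divide_right_mono)
qed

lemma omega2_lower_bound:
  assumes "\<mu> > 0" and "m = omega2_i \<mu> \<or> m = omega2_ii \<mu>"
  obtains c where "c > 0" "\<And>k. k \<noteq> 0 \<Longrightarrow> c \<le> m k"
  using assms omega2_i_ge omega2_ii_ge
  by (metis divide_pos_pos tanh_real_pos_iff zero_less_divide_1_iff zero_less_numeral)

theorem theorem3:
  fixes \<mu> d :: real and m :: "int \<Rightarrow> real"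
  assumes "\<mu> > 0"
    and "m = omega2_i \<mu> \<or> m = omega2_ii \<mu>"
    and "d > 0"
  shows "\<exists>lam nu :: real. \<forall>eta q. is_solution m lam nu eta q \<longrightarrow>
           (\<exists>C. \<forall>t\<ge>0. l2norm (eta t) \<le> C * exp (- d * t) \<and>
                       l2norm (\<lambda>x. deriv (q t) x) \<le> C * exp (- d * t))"
proof -
  obtain c where "c > 0" and c: "\<And>k. k \<noteq> 0 \<Longrightarrow> c \<le> m k"
    using omega2_lower_bound[OF assms(1,2)] by blast
  define lam where "lam = 6 * d"
  define a where "a = ((2 + lam) * exp (2 * lam))\<^sup>2 / c"
  have "lam > 0" "a > 0"
    using \<open>d > 0\<close> \<open>c > 0\<close> by (simp_all add: lam_def a_def)
  have "m 0 = 0"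
    using assms(2) by (auto simp: omega2_i_def omega2_ii_def)
  have stiff: "(2 + lam) * exp (2 * lam) \<le> sqrt (a * m (int k))" if "k \<ge> 1" for k :: nat
  proof -
    have "((2 + lam) * exp (2 * lam))\<^sup>2 = a * c"
      using \<open>c > 0\<close> by (simp add: a_def)
    also have "\<dots> \<le> a * m (int k)"
      using c[of "int k"] that \<open>a > 0\<close> by (intro mult_left_mono) auto
    finally show ?thesis
      using \<open>lam > 0\<close> by (simp add: real_le_rsqrt)
  qed
  show ?thesis
  proof (rule exI[of _ lam], rule exI[of _ "a - 1"], intro allI impI)
    fix eta q assume "is_solution m lam (a - 1) eta q"
    then obtain eta_t q_t q_x W where "damped_wave_solution m lam (a - 1) eta q eta_t q_t q_x W"
      unfolding is_solution_iff_damped_wave_solution by blast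
    from damped_wave_solution.l2norm_decay[OF this \<open>lam > 0\<close> _ \<open>m 0 = 0\<close>] stiff \<open>a > 0\<close>
    show "\<exists>C. \<forall>t\<ge>0. l2norm (eta t) \<le> C * exp (- d * t) \<and> l2norm (\<lambda>x. deriv (q t) x) \<le> C * exp (- d * t)"
      by (simp add: lam_def)
  qed
qed

end
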